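(* Let $h_s,g_s$ be scaling filters, with associated wavelet filters $h_w,g_w$, and let $\varepsilon\ge0$ be such that \[ \bigl| h_s(k)-e^{\mathrm i k/2} g_s(k)\bigr|\le\varepsilon \quad\text{for all } k\in(-\pi,\pi). \] Then for every integer $\mathcal L\ge1$ and every $\ell=1,\dots,\mathcal L$, \[ \bigl\lVert W_g^{(\mathcal L)\dagger}(I\otimes|\ell\rangle)-m(\theta_w)\,W_h^{(\mathcal L)\dagger}(I\otimes|\ell\rangle)\bigr\rVert\le\varepsilon\,\ell, \] where $\lVert\cdot\rVert$ is the operator norm. Consequently $\bigl\lVert W_g^{(\mathcal L)\dagger}p_w^{(\mathcal L)}-m(\theta_w)W_h^{(\mathcal L)\dagger}p_w^{(\mathcal L)}\bigr\rVert\le\varepsilon\mathcal L^2$.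
   Context: Fourier convention: for $f\in\ell^2(\mathbb Z)$, $\hat f(k)=\sum_n f[n]e^{-\mathrm i nk}$, a $2\pi$-periodic function; for a filter $h$ we write $h(k)$ for its Fourier transform. For a bounded measurable $2\pi$-periodic function $\theta$, $m(\theta)$ denotes the Fourier multiplier $(m(\theta)f)^\wedge(k)=\theta(k)\hat f(k)$; $m(h)$ is multiplication by $h(k)$. The upsampling operator $\uparrow$ is $\delta_n\mapsto\delta_{2n}$. A scaling filter is a finitely supported sequence $h_s$ with $|h_s(k)|^2+|h_s(k+\pi)|^2=2$, $h_s(0)=\sqrt2$, generating an orthonormal multiresolution analysis. Its wavelet filter is $h_w(k)=e^{\mathrm ik}\overline{h_s(k+\pi)}$ (similarly $g_w$ from $g_s$), where $k+\pi$ is reduced modulo $2\pi$ into $(-\pi,\pi)$. The truncated wavelet transform $W_h^{(\mathcal L)}:\ell^2(\mathbb Z)\to\ell^2(\mathbb Z)\otimes\mathbb C^{\mathcal L+1}$ is the unitary with $W_h^{(\mathcal L)\dagger}(I\otimes|\ell\rangle)=[m(h_s)\uparrow]^{\ell-1}m(h_w)\uparrow$ for $1\le\ell\le\mathcal L$ and $W_h^{(\mathcal L)\dagger}(I\otimes|\mathcal L+1\rangle)=[m(h_s)\uparrow]^{\mathcal L}$; $W_g^{(\mathcal L)}$ is defined likewise from $g_s,g_w$. $p_w^{(\mathcal L)}=I\otimes\sum_{\ell=1}^{\mathcal L}|\ell\rangle\langle\ell|$. The function $\theta_w$ is the $2\pi$-periodic function with $\theta_w(k)=-\mathrm i\,\mathrm{sign}(k)\,e^{\mathrm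 ik/2}$ for $k\in(-\pi,\pi)$. *)

theory Defs
  imports "HOL-Analysis.Analysis"
begin

definition l2_space :: "('a \<Rightarrow> complex) set" where
  "l2_space = {f. (\<lambda>x. (cmod (f x))\<^sup>2) summable_on UNIV}"

definition l2norm :: "('a \<Rightarrow> complex) \<Rightarrow> real" where
  "l2norm f = sqrt (\<Sum>\<^sub>\<infinity>x. (cmod (f x))\<^sup>2)"

definition op_norm :: "('a \<Rightarrow> complex) set \<Rightarrow> (('a \<Rightarrow> complex) \<Rightarrow> ('b \<Rightarrow> complex)) \<Rightarrow> real" where
  "op_norm D T = (SUP f\<in>D. l2norm (T f) / l2norm f)"

definition filt_ft :: "(int \<Rightarrow> complex) \<Rightarrow> real \<Rightarrow> complex" where
  "filt_ft h k = (\<Sum>n\<in>{n. h n \<noteq> 0}. h n * exp (- \<i> * of_int n * of_real k))"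

text \<open>Fourier coefficients c_j = (1/2pi) int_{-pi}^{pi} theta(k) e^{i j k} dk, so that
  theta(k) = sum_j c_j e^{-i j k}.\<close>
definition fcoeff :: "(real \<Rightarrow> complex) \<Rightarrow> int \<Rightarrow> complex" where
  "fcoeff \<theta> j = set_lebesgue_integral lborel {-pi..pi}
                    (\<lambda>k. \<theta> k * exp (\<i> * of_int j * of_real k)) / of_real (2 * pi)"

text \<open>Fourier multiplier m(theta): (m(theta) f)^ = theta * f^, i.e. convolution of f with the
  Fourier coefficients of theta (absolutely convergent for f in l2).\<close>
definition mult :: "(real \<Rightarrow> complex) \<Rightarrow> (int \<Rightarrow> complex) \<Rightarrow> (int \<Rightarrow> complex)" where
  "mult \<theta> f = (\<lambda>n. \<Sum>\<^sub>\<infinity>j. fcoeff \<theta> j * f (n - j))"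

definition up :: "(int \<Rightarrow> complex) \<Rightarrow> (int \<Rightarrow> complex)" where
  "up f = (\<lambda>n. if even n then f (n div 2) else 0)"

definition generates_onMRA :: "(int \<Rightarrow> complex) \<Rightarrow> bool" where
  "generates_onMRA h \<longleftrightarrow> (\<exists>\<phi> :: real \<Rightarrow> complex.
      \<phi> \<in> borel_measurable lborel \<and>
      integrable lborel (\<lambda>x. (cmod (\<phi> x))\<^sup>2) \<and>
      (AE x in lborel. \<phi> x = of_real (sqrt 2) *
          (\<Sum>n\<in>{n. h n \<noteq> 0}. h n * \<phi> (2 * x - of_int n))) \<and>
      (\<forall>m n :: int. integral\<^sup>L lborel (\<lambda>x. \<phi> (x - of_int m) * cnj (\<phi> (x - of_int n)))
                    = (if m = n then 1 else 0)))"

definition scaling_filter :: "(int \<Rightarrow> complex) \<Rightarrow> bool" where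
  "scaling_filter h \<longleftrightarrow>
     finite {n. h n \<noteq> 0} \<and>
     (\<forall>k. (cmod (filt_ft h k))\<^sup>2 + (cmod (filt_ft h (k + pi)))\<^sup>2 = 2) \<and>
     filt_ft h 0 = of_real (sqrt 2) \<and>
     generates_onMRA h"

text \<open>Wavelet filter in the Fourier domain: h_w(k) = e^{ik} conj(h_s(k+pi))
  (h_s is 2pi-periodic, so reduction of k+pi mod 2pi is immaterial).\<close>
definition wav_ft :: "(int \<Rightarrow> complex) \<Rightarrow> real \<Rightarrow> complex" where
  "wav_ft h k = exp (\<i> * of_real k) * cnj (filt_ft h (k + pi))"

text \<open>The column W^{(L)dagger}(I \<otimes> |l>) as an operator on l2(Z).\<close>
definition wcol :: "(int \<Rightarrow> complex) \<Rightarrow> nat \<Rightarrow> nat \<Rightarrow> (int \<Rightarrow> complex) \<Rightarrow> (int \<Rightarrow> complex)" where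
  "wcol h L l = (if 1 \<le> l \<and> l \<le> L
      then ((mult (filt_ft h) \<circ> up) ^^ (l - 1)) \<circ> mult (wav_ft h) \<circ> up
      else if l = L + 1 then (mult (filt_ft h) \<circ> up) ^^ L
      else (\<lambda>f n. 0))"

text \<open>Elements of l2(Z) \<otimes> C^{L+1} are functions F(n,l), l in {1..L+1}.\<close>
definition tensor_space :: "nat \<Rightarrow> (int \<times> nat \<Rightarrow> complex) set" where
  "tensor_space L = {F \<in> l2_space. \<forall>n l. l \<notin> {1..L+1} \<longrightarrow> F (n, l) = 0}"

text \<open>f \<otimes> |l>, i.e. (I \<otimes> |l>) f.\<close>
definition ket_embed :: "nat \<Rightarrow> (int \<Rightarrow> complex) \<Rightarrow> (int \<times> nat \<Rightarrow> complex)" where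
  "ket_embed l f = (\<lambda>(n, l'). if l' = l then f n else 0)"

definition Wdag :: "(int \<Rightarrow> complex) \<Rightarrow> nat \<Rightarrow> (int \<times> nat \<Rightarrow> complex) \<Rightarrow> (int \<Rightarrow> complex)" where
  "Wdag h L F = (\<lambda>n. \<Sum>l=1..L+1. wcol h L l (\<lambda>m. F (m, l)) n)"

definition p_w :: "nat \<Rightarrow> (int \<times> nat \<Rightarrow> complex) \<Rightarrow> (int \<times> nat \<Rightarrow> complex)" where
  "p_w L F = (\<lambda>(n, l). if 1 \<le> l \<and> l \<le> L then F (n, l) else 0)"

text \<open>theta_w(k) = -i sign(k) e^{ik/2} on (-pi,pi), extended 2pi-periodically
  (reduce k to [-pi,pi)).\<close>
definition theta_w :: "real \<Rightarrow> complex" where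
  "theta_w k = (let k' = k - 2 * pi * of_int \<lfloor>(k + pi) / (2 * pi)\<rfloor>
                in - \<i> * of_real (sgn k') * exp (\<i> * of_real (k' / 2)))"

end

theory Submission
  imports Defs
begin

text \<open>
  In the Fourier domain the column \<open>l = m + 1\<close> of \<open>W\<^sub>g\<^sup>\<dagger>\<close> multiplies by
  \<open>g_s(k) g_s(2k) ... g_s(2^(m-1) k) g_w(2^m k)\<close> and evaluates the input at \<open>2^(m+1) k\<close>.
  Moving \<open>\<theta>\<^sub>w\<close> from the output through this product to the input, one factor at a time,
  costs at each step a defect \<open>g_s(k) \<theta>\<^sub>w(2k) - \<theta>\<^sub>w(k) h_s(k)\<close> or
  \<open>g_w(k) - \<theta>\<^sub>w(k) h_w(k)\<close>, which has modulus at most \<open>\<epsilon>\<close> because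
  \<open>\<theta>\<^sub>w(2k) = \<theta>\<^sub>w(k) e^(ik/2)\<close>. Each of the \<open>l\<close> defect terms has
  \<open>L\<^sup>2(-\<pi>, \<pi>)\<close>-norm at most \<open>\<epsilon>\<close> times that of the input, since multiplying a
  function of \<open>2k\<close> by a filter with \<open>|a(k)|\<^sup>2 + |a(k + \<pi>)|\<^sup>2 = 2\<close> preserves
  \<open>L\<^sup>2\<close>-norms. Bessel's inequality and Parseval's identity for trigonometric polynomials turn
  this into the operator bound \<open>\<epsilon> l\<close> on finitely supported sequences; truncation extends
  it to all square-summable sequences, and the block bound \<open>\<epsilon> L\<^sup>2\<close> follows by
  summing the \<open>L\<close> columns.
\<close>

section \<open>Fourier analysis on [-\<pi>, \<pi>]\<close>

definition bdd_measurable :: "(real \<Rightarrow> 'a::{banach,second_countable_topology}) \<Rightarrow> bool" where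
  "bdd_measurable f \<longleftrightarrow> f \<in> borel_measurable borel \<and> (\<exists>B. \<forall>x. norm (f x) \<le> B)"

lemma bdd_measurable_set_integrable:
  assumes "bdd_measurable f" shows "set_integrable lborel {a..b} f"
proof -
  obtain B where B: "\<forall>x. norm (f x) \<le> B" and [measurable]: "f \<in> borel_measurable borel"
    using assms bdd_measurable_def by blast
  have "set_integrable lborel {a..b} (\<lambda>_. B)"
    by (rule borel_integrable_atLeastAtMost') (rule continuous_on_const)
  then show ?thesis
  proof (rule set_integrable_bound)
    show "set_borel_measurable lborel {a..b} f"
      unfolding set_borel_measurable_def by measurable
    show "AE x in lborel. x \<in> {a..b} \<longrightarrow> norm (f x) \<le> norm B"
      using B by (auto intro!: AE_I2 intro: order_trans[OF _ abs_ge_self])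
  qed
qed

lemma bdd_measurable_const [simp, intro]: "bdd_measurable (\<lambda>x. c)"
  unfolding bdd_measurable_def by auto

lemma bdd_measurable_add [intro]:
  "bdd_measurable f \<Longrightarrow> bdd_measurable g \<Longrightarrow> bdd_measurable (\<lambda>x. f x + g x)"
  unfolding bdd_measurable_def
proof (elim conjE exE, intro conjI)
  fix B C assume "\<forall>x. norm (f x) \<le> B" "\<forall>x. norm (g x) \<le> C"
  then show "\<exists>B. \<forall>x. norm (f x + g x) \<le> B"
    by (intro exI[of _ "B + C"]) (metis add_mono norm_triangle_ineq order_trans)
qed auto

lemma bdd_measurable_diff [intro]:
  "bdd_measurable f \<Longrightarrow> bdd_measurable g \<Longrightarrow> bdd_measurable (\<lambda>x. f x - g x)"
  unfolding bdd_measurable_def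
proof (elim conjE exE, intro conjI)
  fix B C assume "\<forall>x. norm (f x) \<le> B" "\<forall>x. norm (g x) \<le> C"
  then show "\<exists>B. \<forall>x. norm (f x - g x) \<le> B"
    by (intro exI[of _ "B + C"]) (metis add_mono norm_triangle_ineq4 order_trans)
qed auto

lemma bdd_measurable_mult [intro]:
  fixes f g :: "real \<Rightarrow> 'a::{banach,second_countable_topology,real_normed_algebra}"
  shows "bdd_measurable f \<Longrightarrow> bdd_measurable g \<Longrightarrow> bdd_measurable (\<lambda>x. f x * g x)"
  unfolding bdd_measurable_def
proof (elim conjE exE, intro conjI)
  fix B C assume B: "\<forall>x. norm (f x) \<le> B" and C: "\<forall>x. norm (g x) \<le> C"
  show "\<exists>B. \<forall>x. norm (f x * g x) \<le> B"
  proof (intro exI[of _ "B * C"] allI)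
    fix x
    have "norm (f x * g x) \<le> norm (f x) * norm (g x)" by (rule norm_mult_ineq)
    also have "\<dots> \<le> B * C" using B C by (meson mult_mono norm_ge_zero order_trans)
    finally show "norm (f x * g x) \<le> B * C" .
  qed
qed auto

lemma bdd_measurable_sum [intro]:
  "(\<And>i. i \<in> I \<Longrightarrow> bdd_measurable (f i)) \<Longrightarrow> bdd_measurable (\<lambda>x. \<Sum>i\<in>I. f i x)"
  by (induction I rule: infinite_finite_induct) auto

lemma bdd_measurable_cnj [intro]: "bdd_measurable f \<Longrightarrow> bdd_measurable (\<lambda>x. cnj (f x))"
proof -
  have "(cnj :: complex \<Rightarrow> complex) \<in> borel_measurable borel"
    by (intro borel_measurable_continuous_onI continuous_on_cnj continuous_on_id)
  then show "bdd_measurable f \<Longrightarrow> bdd_measurable (\<lambda>x. cnj (f x))"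
    unfolding bdd_measurable_def using measurable_compose by auto
qed

lemma bdd_measurable_norm [intro]: "bdd_measurable f \<Longrightarrow> bdd_measurable (\<lambda>x. norm (f x))"
  unfolding bdd_measurable_def
proof (elim conjE exE, intro conjI)
  fix B assume "\<forall>x. norm (f x) \<le> B"
  then show "\<exists>B. \<forall>x. norm (norm (f x)) \<le> B" by auto
qed auto

lemma bdd_measurable_norm_power2 [intro]:
  "bdd_measurable f \<Longrightarrow> bdd_measurable (\<lambda>x. (norm (f x))\<^sup>2)"
  unfolding power2_eq_square by (intro bdd_measurable_mult bdd_measurable_norm)

lemma bdd_measurable_affine [intro]: "bdd_measurable f \<Longrightarrow> bdd_measurable (\<lambda>x. f (c * x + d))"
  unfolding bdd_measurable_def
proof (elim conjE exE, intro conjI)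
  assume [measurable]: "f \<in> borel_measurable borel"
  show "(\<lambda>x. f (c * x + d)) \<in> borel_measurable borel" by measurable
qed auto

lemma bdd_measurable_scale [intro]: "bdd_measurable f \<Longrightarrow> bdd_measurable (\<lambda>x. f (c * x))"
  using bdd_measurable_affine[of f c 0] by simp

lemma bdd_measurable_exp_int [intro]:
  "bdd_measurable (\<lambda>k::real. exp (\<i> * of_int m * of_real k))"
  unfolding bdd_measurable_def
proof (intro conjI exI allI)
  show "(\<lambda>k::real. exp (\<i> * of_int m * of_real k)) \<in> borel_measurable borel"
    by (intro borel_measurable_continuous_onI continuous_intros)
  fix x :: real
  have "\<i> * of_int m * of_real x = \<i> * of_real (of_int m * x)" by simp
  then show "norm (exp (\<i> * of_int m * of_real x)) \<le> 1"
    by (simp only: norm_exp_i_times)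
qed

lemma bdd_measurable_exp_minus_int [intro]:
  "bdd_measurable (\<lambda>k::real. exp (- \<i> * of_int m * of_real k))"
  using bdd_measurable_exp_int[of "- m"] by simp

lemma set_integral_exp_int:
  fixes m :: int
  shows "(LINT k:{-pi..pi}|lborel. exp (\<i> * of_int m * of_real k)) = (if m = 0 then 2 * pi else 0)"
proof -
  have "((\<lambda>k::real. exp (\<i> * of_int m * of_real k)) has_integral (if m = 0 then 2 * pi else 0)) {-pi..pi}"
  proof (cases "m = 0")
    case True
    then show ?thesis
      using has_integral_const_real[of "1::complex" "-pi" pi] by (simp add: scaleR_conv_of_real)
  next
    case False
    define F where "F z = exp (\<i> * of_int m * z) / (\<i> * of_int m)" for z :: complex
    have "((\<lambda>k::real. F (of_real k)) has_vector_derivative exp (\<i> * of_int m * of_real k))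
            (at k within {-pi..pi})" for k
      by (rule has_vector_derivative_real_field) (use False in \<open>auto simp: F_def intro!: derivative_eq_intros\<close>)
    then have "((\<lambda>k::real. exp (\<i> * of_int m * of_real k)) has_integral F (of_real pi) - F (of_real (- pi))) {-pi..pi}"
      by (intro fundamental_theorem_of_calculus) auto
    moreover have "F (of_real pi) = F (of_real (- pi))"
    proof -
      have "exp (\<i> * of_int m * of_real pi) = exp (\<i> * of_int m * of_real (- pi) + \<i> * (of_int m * (of_real pi * 2)))"
        by (simp add: algebra_simps)
      also have "\<dots> = exp (\<i> * of_int m * of_real (- pi))" by (rule exp_plus_2pin)
      finally show ?thesis unfolding F_def by simp
    qed
    ultimately show ?thesis using False by simp
  qed
  moreover have "set_integrable lborel {-pi..pi} (\<lambda>k::real. exp (\<i> * of_int m * of_real k))"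
    by (intro bdd_measurable_set_integrable bdd_measurable_exp_int)
  ultimately show ?thesis
    by (simp only: set_borel_integral_eq_integral(2) integral_unique)
qed

definition trig_poly :: "(int \<Rightarrow> complex) \<Rightarrow> int set \<Rightarrow> real \<Rightarrow> complex" where
  "trig_poly a S k = (\<Sum>n\<in>S. a n * exp (- \<i> * of_int n * of_real k))"

lemma bdd_measurable_trig_poly [intro]: "bdd_measurable (trig_poly a S)"
  unfolding trig_poly_def[abs_def]
  by (intro bdd_measurable_sum bdd_measurable_mult bdd_measurable_const bdd_measurable_exp_minus_int)

lemma set_integral_sum:
  fixes f :: "'i \<Rightarrow> 'a \<Rightarrow> 'b::{banach,second_countable_topology}"
  assumes "\<And>i. i \<in> I \<Longrightarrow> set_integrable M A (f i)"
  shows "(LINT x:A|M. (\<Sum>i\<in>I. f i x)) = (\<Sum>i\<in>I. LINT x:A|M. f i x)"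
  using assms unfolding set_lebesgue_integral_def set_integrable_def
  by (simp add: scaleR_sum_right Bochner_Integration.integral_sum)

lemma fcoeff_sum:
  assumes "\<And>n. n \<in> S \<Longrightarrow> bdd_measurable (F n)"
  shows "fcoeff (\<lambda>k. \<Sum>n\<in>S. F n k) j = (\<Sum>n\<in>S. fcoeff (F n) j)"
proof -
  have "(LINT k:{-pi..pi}|lborel. (\<Sum>n\<in>S. F n k) * exp (\<i> * of_int j * of_real k))
      = (\<Sum>n\<in>S. LINT k:{-pi..pi}|lborel. F n k * exp (\<i> * of_int j * of_real k))"
    unfolding sum_distrib_right
    by (rule set_integral_sum) (intro bdd_measurable_set_integrable bdd_measurable_mult assms bdd_measurable_exp_int)
  then show ?thesis unfolding fcoeff_def by (simp add: sum_divide_distrib)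
qed

lemma fcoeff_diff:
  assumes "bdd_measurable F" "bdd_measurable G"
  shows "fcoeff (\<lambda>k. F k - G k) j = fcoeff F j - fcoeff G j"
proof -
  have "(LINT k:{-pi..pi}|lborel. (F k - G k) * exp (\<i> * of_int j * of_real k))
      = (LINT k:{-pi..pi}|lborel. F k * exp (\<i> * of_int j * of_real k))
        - (LINT k:{-pi..pi}|lborel. G k * exp (\<i> * of_int j * of_real k))"
    unfolding left_diff_distrib
    by (rule set_integral_diff) (intro bdd_measurable_set_integrable bdd_measurable_mult assms bdd_measurable_exp_int)+
  then show ?thesis unfolding fcoeff_def by (simp add: diff_divide_distrib)
qed

lemma fcoeff_cmult: "fcoeff (\<lambda>k. c * F k) j = c * fcoeff F j"
  unfolding fcoeff_def by (simp add: mult.assoc)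

lemma fcoeff_mult_exp: "fcoeff (\<lambda>k. F k * exp (- \<i> * of_int n * of_real k)) j = fcoeff F (j - n)"
proof -
  have "exp (- \<i> * of_int n * of_real k) * exp (\<i> * of_int j * of_real k) = exp (\<i> * of_int (j - n) * of_real k)"
    for k :: real
    by (simp add: exp_add[symmetric] algebra_simps)
  then show ?thesis unfolding fcoeff_def by (simp add: mult.assoc)
qed

lemma fcoeff_mult_trig_poly:
  assumes "bdd_measurable \<Theta>"
  shows "fcoeff (\<lambda>k. \<Theta> k * trig_poly a S k) j = (\<Sum>n\<in>S. a n * fcoeff \<Theta> (j - n))"
proof -
  have "fcoeff (\<lambda>k. \<Theta> k * trig_poly a S k) j
      = fcoeff (\<lambda>k. \<Sum>n\<in>S. a n * (\<Theta> k * exp (- \<i> * of_int n * of_real k))) j"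
    unfolding trig_poly_def by (simp add: sum_distrib_left algebra_simps)
  also have "\<dots> = (\<Sum>n\<in>S. a n * fcoeff \<Theta> (j - n))"
    by (subst fcoeff_sum) (auto intro!: bdd_measurable_mult assms simp only: fcoeff_cmult fcoeff_mult_exp)
  finally show ?thesis .
qed

lemma fcoeff_trig_poly:
  assumes "finite S"
  shows "fcoeff (trig_poly a S) j = (if j \<in> S then a j else 0)"
proof -
  have "fcoeff (\<lambda>k. 1) n = (if n = 0 then 1 else 0)" for n
    unfolding fcoeff_def using set_integral_exp_int[of n] by simp
  then have "fcoeff (\<lambda>k. 1 * trig_poly a S k) j = (\<Sum>n\<in>S. if n = j then a n else 0)"
    by (subst fcoeff_mult_trig_poly) (auto intro: sum.cong)
  then show ?thesis using assms by (simp add: sum.delta')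
qed

lemma set_integral_mult_cnj_trig_poly:
  assumes "bdd_measurable F"
  shows "(LINT k:{-pi..pi}|lborel. F k * cnj (trig_poly a S k)) = 2 * pi * (\<Sum>n\<in>S. cnj (a n) * fcoeff F n)"
proof -
  have "(LINT k:{-pi..pi}|lborel. F k * cnj (trig_poly a S k))
     = (LINT k:{-pi..pi}|lborel. (\<Sum>n\<in>S. cnj (a n) * (F k * exp (\<i> * of_int n * of_real k))))"
    unfolding trig_poly_def by (simp add: exp_cnj sum_distrib_left algebra_simps)
  also have "\<dots> = (\<Sum>n\<in>S. cnj (a n) * (2 * pi * fcoeff F n))"
    by (subst set_integral_sum)
      (auto intro!: bdd_measurable_set_integrable bdd_measurable_mult assms simp: fcoeff_def)
  finally show ?thesis by (simp add: sum_distrib_left algebra_simps)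
qed

lemma sum_cnj_mult_self: "(\<Sum>n\<in>S. cnj (c n) * c n) = complex_of_real (\<Sum>n\<in>S. (cmod (c n))\<^sup>2)"
  by (simp only: of_real_sum complex_norm_square mult.commute)

lemma set_integral_cmod_power2:
  "complex_of_real (LINT k:A|M. (cmod (F k))\<^sup>2) = (LINT k:A|M. F k * cnj (F k))"
  by (simp only: complex_norm_square[symmetric] set_integral_complex_of_real)

lemma parseval_trig_poly:
  assumes "finite S"
  shows "(LINT k:{-pi..pi}|lborel. (cmod (trig_poly a S k))\<^sup>2) = 2 * pi * (\<Sum>n\<in>S. (cmod (a n))\<^sup>2)"
proof -
  have "complex_of_real (LINT k:{-pi..pi}|lborel. (cmod (trig_poly a S k))\<^sup>2)
      = (LINT k:{-pi..pi}|lborel. trig_poly a S k * cnj (trig_poly a S k))"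
    by (rule set_integral_cmod_power2)
  also have "\<dots> = 2 * pi * (\<Sum>n\<in>S. cnj (a n) * fcoeff (trig_poly a S) n)"
    by (rule set_integral_mult_cnj_trig_poly) (rule bdd_measurable_trig_poly)
  also have "\<dots> = 2 * pi * (\<Sum>n\<in>S. cnj (a n) * a n)"
    using assms by (simp add: fcoeff_trig_poly)
  also have "\<dots> = complex_of_real (2 * pi * (\<Sum>n\<in>S. (cmod (a n))\<^sup>2))"
    by (simp only: sum_cnj_mult_self of_real_mult of_real_numeral)
  finally show ?thesis using of_real_eq_iff by blast
qed

lemma set_integral_cmod_diff_power2:
  assumes "bdd_measurable F" "bdd_measurable G"
  shows "complex_of_real (LINT k:{a..b}|lborel. (cmod (F k - G k))\<^sup>2)
       = (LINT k:{a..b}|lborel. F k * cnj (F k)) - (LINT k:{a..b}|lborel. F k * cnj (G k))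
         - cnj (LINT k:{a..b}|lborel. F k * cnj (G k)) + (LINT k:{a..b}|lborel. G k * cnj (G k))"
proof -
  have int: "set_integrable lborel {a..b} (\<lambda>k. X k * cnj (Y k))"
    if "bdd_measurable X" "bdd_measurable Y" for X Y :: "real \<Rightarrow> complex"
    by (intro bdd_measurable_set_integrable bdd_measurable_mult bdd_measurable_cnj that)
  have "cnj (F k * cnj (G k)) = G k * cnj (F k)" for k
    by (simp add: mult.commute)
  then have "cnj (LINT k:{a..b}|lborel. F k * cnj (G k)) = (LINT k:{a..b}|lborel. G k * cnj (F k))"
    unfolding set_lebesgue_integral_def
    by (simp only: Bochner_Integration.integral_cnj[symmetric] complex_cnj_scaleR)
  moreover have "(F k - G k) * cnj (F k - G k)
      = F k * cnj (F k) - F k * cnj (G k) - G k * cnj (F k) + G k * cnj (G k)" for k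
    by (simp add: algebra_simps)
  ultimately show ?thesis
    unfolding set_integral_cmod_power2
    by (simp add: set_integral_add set_integral_diff int assms)
qed

lemma bessel_inequality:
  assumes G: "bdd_measurable G" and S: "finite S"
  shows "(\<Sum>n\<in>S. (cmod (fcoeff G n))\<^sup>2) \<le> (LINT k:{-pi..pi}|lborel. (cmod (G k))\<^sup>2) / (2 * pi)"
proof -
  define P where "P = trig_poly (fcoeff G) S"
  define Q where "Q = (\<Sum>n\<in>S. (cmod (fcoeff G n))\<^sup>2)"
  have bP: "bdd_measurable P" unfolding P_def by (rule bdd_measurable_trig_poly)
  have GP: "(LINT k:{-pi..pi}|lborel. G k * cnj (P k)) = of_real (2 * pi * Q)"
    unfolding P_def Q_def set_integral_mult_cnj_trig_poly[OF G] sum_cnj_mult_self by simp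
  have PP: "(LINT k:{-pi..pi}|lborel. (cmod (P k))\<^sup>2) = 2 * pi * Q"
    unfolding P_def Q_def by (rule parseval_trig_poly[OF S])
  have "complex_of_real (LINT k:{-pi..pi}|lborel. (cmod (G k - P k))\<^sup>2)
      = complex_of_real ((LINT k:{-pi..pi}|lborel. (cmod (G k))\<^sup>2) - 2 * pi * Q)"
    unfolding set_integral_cmod_diff_power2[OF G bP]
      GP set_integral_cmod_power2[symmetric] PP by simp
  moreover have "0 \<le> (LINT k:{-pi..pi}|lborel. (cmod (G k - P k))\<^sup>2)"
    unfolding set_lebesgue_integral_def by (intro Bochner_Integration.integral_nonneg) simp
  ultimately have "2 * pi * Q \<le> (LINT k:{-pi..pi}|lborel. (cmod (G k))\<^sup>2)"
    by (simp only: of_real_eq_iff)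
  then show ?thesis unfolding Q_def by (simp add: field_simps)
qed

section \<open>Periodic functions and changes of variable\<close>

definition periodic_2pi :: "(real \<Rightarrow> 'a) \<Rightarrow> bool" where
  "periodic_2pi f \<longleftrightarrow> (\<forall>x. f (x + 2 * pi) = f x)"

lemma periodic_2pi_minus: "periodic_2pi f \<Longrightarrow> f (x - 2 * pi) = f x"
  unfolding periodic_2pi_def by (metis diff_add_cancel)

lemma periodic_2pi_add_nat: "periodic_2pi f \<Longrightarrow> f (x + of_nat n * (2 * pi)) = f x"
proof (induction n)
  case (Suc n)
  have "f (x + of_nat (Suc n) * (2 * pi)) = f ((x + of_nat n * (2 * pi)) + 2 * pi)"
    by (simp add: algebra_simps)
  then show ?case using Suc unfolding periodic_2pi_def by simp
qed simp

lemma periodic_2pi_scale_pow2: "periodic_2pi f \<Longrightarrow> periodic_2pi (\<lambda>t. f (2 ^ q * t))"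
  unfolding periodic_2pi_def
proof
  fix x assume "\<forall>x. f (x + 2 * pi) = f x"
  then have "f (2 ^ q * x + of_nat (2 ^ q) * (2 * pi)) = f (2 ^ q * x)"
    by (intro periodic_2pi_add_nat) (simp add: periodic_2pi_def)
  then show "f (2 ^ q * (x + 2 * pi)) = f (2 ^ q * x)" by (simp add: algebra_simps)
qed

lemma periodic_2pi_scale2: "periodic_2pi f \<Longrightarrow> periodic_2pi (\<lambda>t. f (2 * t))"
  using periodic_2pi_scale_pow2[of f 1] by simp

lemma periodic_2pi_mult: "periodic_2pi f \<Longrightarrow> periodic_2pi g \<Longrightarrow> periodic_2pi (\<lambda>x. f x * g x)"
  unfolding periodic_2pi_def by simp

lemma periodic_2pi_diff: "periodic_2pi f \<Longrightarrow> periodic_2pi g \<Longrightarrow> periodic_2pi (\<lambda>x. f x - g x)"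
  unfolding periodic_2pi_def by simp

lemma periodic_2pi_comp: "periodic_2pi f \<Longrightarrow> periodic_2pi (\<lambda>x. F (f x))"
  unfolding periodic_2pi_def by simp

lemma periodic_2pi_const: "periodic_2pi (\<lambda>x. c)"
  unfolding periodic_2pi_def by simp

lemma periodic_2pi_trig_poly: "periodic_2pi (trig_poly a S)"
  unfolding periodic_2pi_def trig_poly_def
proof (intro allI sum.cong refl)
  fix x n
  have "exp (- \<i> * of_int n * of_real (x + 2 * pi))
      = exp (- \<i> * of_int n * of_real x + \<i> * (of_int (- n) * (of_real pi * 2)))"
    by (simp add: algebra_simps)
  also have "\<dots> = exp (- \<i> * of_int n * of_real x)" by (rule exp_plus_2pin)
  finally show "a n * exp (- \<i> * of_int n * of_real (x + 2 * pi)) = a n * exp (- \<i> * of_int n * of_real x)"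
    by simp
qed

lemma set_integral_scale2:
  fixes f :: "real \<Rightarrow> 'a::{banach,second_countable_topology}"
  shows "(LINT x:{a..b}|lborel. f (2 * x)) = (1/2) *\<^sub>R (LINT x:{2*a..2*b}|lborel. f x)"
proof -
  have "(LINT x:{2*a..2*b}|lborel. f x)
      = \<bar>2\<bar> *\<^sub>R integral\<^sup>L lborel (\<lambda>x. indicator {2*a..2*b} (0 + 2 * x) *\<^sub>R f (0 + 2 * x))"
    unfolding set_lebesgue_integral_def by (rule lborel_integral_real_affine) simp
  also have "(\<lambda>x. indicator {2*a..2*b} (0 + 2 * x) *\<^sub>R f (0 + 2 * x)) = (\<lambda>x::real. indicator {a..b} x *\<^sub>R f (2 * x))"
    by (auto simp: fun_eq_iff split: split_indicator)
  finally show ?thesis by (simp add: set_lebesgue_integral_def)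
qed

lemma set_integral_shift:
  fixes f :: "real \<Rightarrow> 'a::{banach,second_countable_topology}"
  shows "(LINT x:{a..b}|lborel. f (x + c)) = (LINT x:{a+c..b+c}|lborel. f x)"
proof -
  have "(LINT x:{a+c..b+c}|lborel. f x)
      = \<bar>1\<bar> *\<^sub>R integral\<^sup>L lborel (\<lambda>x. indicator {a+c..b+c} (c + 1 * x) *\<^sub>R f (c + 1 * x))"
    unfolding set_lebesgue_integral_def by (rule lborel_integral_real_affine) simp
  also have "(\<lambda>x. indicator {a+c..b+c} (c + 1 * x) *\<^sub>R f (c + 1 * x)) = (\<lambda>x::real. indicator {a..b} x *\<^sub>R f (x + c))"
    by (auto simp: fun_eq_iff add.commute split: split_indicator)
  finally show ?thesis by (simp add: set_lebesgue_integral_def)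
qed

lemma set_integral_interval_split:
  fixes f :: "real \<Rightarrow> 'a::{banach,second_countable_topology}"
  assumes "a \<le> b" "b \<le> c" "bdd_measurable f"
  shows "(LINT x:{a..c}|lborel. f x) = (LINT x:{a..b}|lborel. f x) + (LINT x:{b..c}|lborel. f x)"
proof -
  have "{a..c} = {a..b} \<union> {b..c}" using assms by auto
  moreover have "(LINT x:{a..b} \<union> {b..c}|lborel. f x) = (LINT x:{a..b}|lborel. f x) + (LINT x:{b..c}|lborel. f x)"
  proof (rule set_integral_Un_AE)
    show "AE x in lborel. \<not> (x \<in> {a..b} \<and> x \<in> {b..c})"
      using AE_lborel_singleton[of b] by eventually_elim auto
  qed (auto intro: bdd_measurable_set_integrable assms)
  ultimately show ?thesis by simp
qed

lemma set_integral_periodic_2pi_window: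
  fixes f :: "real \<Rightarrow> 'a::{banach,second_countable_topology}"
  assumes "periodic_2pi f" "bdd_measurable f"
  shows "(LINT x:{0..2*pi}|lborel. f x) = (LINT x:{-pi..pi}|lborel. f x)"
proof -
  have "(LINT x:{0..2*pi}|lborel. f x) = (LINT x:{0..pi}|lborel. f x) + (LINT x:{pi..2*pi}|lborel. f x)"
    by (rule set_integral_interval_split) (auto simp: assms)
  also have "(LINT x:{pi..2*pi}|lborel. f x) = (LINT x:{-pi..0}|lborel. f (x + 2*pi))"
    by (subst set_integral_shift) simp
  also have "\<dots> = (LINT x:{-pi..0}|lborel. f x)"
    using assms(1) unfolding periodic_2pi_def by simp
  also have "(LINT x:{0..pi}|lborel. f x) + (LINT x:{-pi..0}|lborel. f x) = (LINT x:{-pi..pi}|lborel. f x)"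
    by (subst set_integral_interval_split[of "-pi" 0 pi]) (auto simp: assms)
  finally show ?thesis .
qed

lemma set_integral_scale2_fold:
  fixes f :: "real \<Rightarrow> 'a::{banach,second_countable_topology}"
  assumes f: "bdd_measurable f"
  shows "(LINT k:{-pi..pi}|lborel. f (2 * k)) = (1/2) *\<^sub>R (LINT t:{0..2*pi}|lborel. f (t - 2 * pi) + f t)"
proof -
  have shifted: "bdd_measurable (\<lambda>t. f (t - 2 * pi))"
    using bdd_measurable_affine[OF f, of 1 "- 2 * pi"] by simp
  have "(LINT t:{-2*pi..2*pi}|lborel. f t) = (LINT t:{-2*pi..0}|lborel. f t) + (LINT t:{0..2*pi}|lborel. f t)"
    by (rule set_integral_interval_split) (auto simp: f)
  also have "(LINT t:{-2*pi..0}|lborel. f t) = (LINT t:{0..2*pi}|lborel. f (t + - 2 * pi))"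
    by (subst set_integral_shift) simp
  also have "\<dots> + (LINT t:{0..2*pi}|lborel. f t) = (LINT t:{0..2*pi}|lborel. f (t - 2 * pi) + f t)"
    using set_integral_add(2)[OF bdd_measurable_set_integrable[OF shifted] bdd_measurable_set_integrable[OF f]]
    by simp
  finally have "(LINT t:{-2*pi..2*pi}|lborel. f t) = (LINT t:{0..2*pi}|lborel. f (t - 2 * pi) + f t)" .
  then show ?thesis by (simp add: set_integral_scale2)
qed

lemma set_integral_mult_scale2_eq:
  fixes A W :: "real \<Rightarrow> real"
  assumes A: "bdd_measurable A" "periodic_2pi A" and W: "bdd_measurable W" "periodic_2pi W"
    and mean: "\<And>s. A s + A (s + pi) = 2"
  shows "(LINT k:{-pi..pi}|lborel. A k * W (2 * k)) = (LINT t:{-pi..pi}|lborel. W t)"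
proof -
  define g where "g t = A (t / 2) * W t" for t
  have bdd_g: "bdd_measurable g"
    unfolding g_def[abs_def] using bdd_measurable_scale[OF A(1), of "1/2"] W(1)
    by (intro bdd_measurable_mult) simp_all
  have pointwise: "g (t - 2 * pi) + g t = 2 * W t" for t
  proof -
    have "(t - 2 * pi) / 2 = (t / 2 + pi) - 2 * pi" by (simp add: field_simps)
    then have "A ((t - 2 * pi) / 2) = A (t / 2 + pi)"
      by (simp only: periodic_2pi_minus[OF A(2)])
    then have "g (t - 2 * pi) = A (t / 2 + pi) * W t"
      unfolding g_def by (simp add: periodic_2pi_minus[OF W(2)])
    then have "g (t - 2 * pi) + g t = (A (t / 2) + A (t / 2 + pi)) * W t"
      unfolding g_def by (simp add: distrib_right)
    then show ?thesis using mean[of "t / 2"] by simp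
  qed
  have "(LINT k:{-pi..pi}|lborel. g (2 * k)) = (1/2) * (LINT t:{0..2*pi}|lborel. g (t - 2 * pi) + g t)"
    by (simp add: set_integral_scale2_fold bdd_g)
  also have "\<dots> = (LINT t:{0..2*pi}|lborel. W t)"
    by (simp add: pointwise)
  finally show ?thesis
    using set_integral_periodic_2pi_window[OF W(2,1)] unfolding g_def by simp
qed

section \<open>Filters and the columns of the inverse wavelet transform\<close>

definition supp :: "(int \<Rightarrow> complex) \<Rightarrow> int set" where
  "supp x = {n. x n \<noteq> 0}"

definition fin_conv :: "(int \<Rightarrow> complex) \<Rightarrow> int set \<Rightarrow> (int \<Rightarrow> complex) \<Rightarrow> int \<Rightarrow> complex" where
  "fin_conv a S x = (\<lambda>n. \<Sum>j\<in>S. a j * x (n - j))"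

lemma filt_ft_eq_trig_poly: "filt_ft x = trig_poly x (supp x)"
  unfolding filt_ft_def[abs_def] trig_poly_def[abs_def] supp_def by simp

lemma trig_poly_superset_supp:
  assumes "finite A" "supp x \<subseteq> A"
  shows "trig_poly x A k = filt_ft x k"
  unfolding filt_ft_eq_trig_poly trig_poly_def
  by (rule sum.mono_neutral_right) (use assms in \<open>auto simp: supp_def\<close>)

lemma bdd_measurable_filt_ft [intro]: "bdd_measurable (filt_ft h)"
  unfolding filt_ft_eq_trig_poly by (rule bdd_measurable_trig_poly)

lemma periodic_2pi_filt_ft: "periodic_2pi (filt_ft h)"
  unfolding filt_ft_eq_trig_poly by (rule periodic_2pi_trig_poly)

lemma fcoeff_filt_ft: "finite (supp x) \<Longrightarrow> fcoeff (filt_ft x) n = x n"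
  unfolding filt_ft_eq_trig_poly by (simp add: fcoeff_trig_poly) (simp add: supp_def)

lemma mult_trig_poly:
  assumes "finite S"
  shows "mult (trig_poly a S) = fin_conv a S"
proof (intro ext)
  fix x n
  have "mult (trig_poly a S) x n = (\<Sum>\<^sub>\<infinity>j. (if j \<in> S then a j else 0) * x (n - j))"
    unfolding mult_def by (simp add: fcoeff_trig_poly assms)
  also have "\<dots> = (\<Sum>\<^sub>\<infinity>j\<in>S. (if j \<in> S then a j else 0) * x (n - j))"
    by (rule infsum_cong_neutral) auto
  also have "\<dots> = fin_conv a S x n"
    using assms by (simp add: fin_conv_def cong: sum.cong)
  finally show "mult (trig_poly a S) x n = fin_conv a S x n" .
qed

lemma mult_filt_ft: "finite (supp h) \<Longrightarrow> mult (filt_ft h) = fin_conv h (supp h)"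
  unfolding filt_ft_eq_trig_poly by (simp add: mult_trig_poly)

text \<open>Time-domain coefficients of the wavelet filter: \<open>h_w[j] = (-1)^(j+1) conj(h_s[-j-1])\<close>.\<close>
definition wav_coeff :: "(int \<Rightarrow> complex) \<Rightarrow> int \<Rightarrow> complex" where
  "wav_coeff h j = cnj (h (- j - 1)) * exp (\<i> * of_int (- j - 1) * of_real pi)"

definition wav_supp :: "(int \<Rightarrow> complex) \<Rightarrow> int set" where
  "wav_supp h = (\<lambda>n. - n - 1) ` supp h"

lemma wav_ft_eq_trig_poly: "wav_ft h = trig_poly (wav_coeff h) (wav_supp h)"
proof
  fix k
  have inj: "inj_on (\<lambda>n::int. - n - 1) (supp h)" by (auto simp: inj_on_def)
  have "wav_coeff h (- n - 1) * exp (- \<i> * of_int (- n - 1) * of_real k)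
      = exp (\<i> * of_real k) * (cnj (h n) * exp (\<i> * of_int n * of_real (k + pi)))" for n
  proof -
    have "exp (\<i> * of_int n * of_real pi) * exp (- \<i> * of_int (- n - 1) * of_real k)
        = exp (\<i> * of_real k) * exp (\<i> * of_int n * of_real (k + pi))"
      by (simp add: exp_add[symmetric] algebra_simps)
    then show ?thesis unfolding wav_coeff_def by (simp add: algebra_simps)
  qed
  then have "trig_poly (wav_coeff h) (wav_supp h) k
      = (\<Sum>n\<in>supp h. exp (\<i> * of_real k) * (cnj (h n) * exp (\<i> * of_int n * of_real (k + pi))))"
    unfolding trig_poly_def wav_supp_def by (simp add: sum.reindex[OF inj])
  also have "\<dots> = wav_ft h k"
    unfolding wav_ft_def filt_ft_eq_trig_poly trig_poly_def by (simp add: sum_distrib_left exp_cnj)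
  finally show "wav_ft h k = trig_poly (wav_coeff h) (wav_supp h) k" by simp
qed

lemma finite_wav_supp: "finite (supp h) \<Longrightarrow> finite (wav_supp h)"
  unfolding wav_supp_def by simp

lemma bdd_measurable_wav_ft [intro]: "bdd_measurable (wav_ft h)"
  unfolding wav_ft_eq_trig_poly by (rule bdd_measurable_trig_poly)

lemma periodic_2pi_wav_ft: "periodic_2pi (wav_ft h)"
  unfolding wav_ft_eq_trig_poly by (rule periodic_2pi_trig_poly)

lemma mult_wav_ft: "finite (supp h) \<Longrightarrow> mult (wav_ft h) = fin_conv (wav_coeff h) (wav_supp h)"
  unfolding wav_ft_eq_trig_poly by (simp add: mult_trig_poly finite_wav_supp)

lemma supp_fin_conv:
  assumes "finite S" "finite (supp x)"
  shows "supp (fin_conv a S x) \<subseteq> (\<lambda>(j, m). j + m) ` (S \<times> supp x)"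
    and "finite (supp (fin_conv a S x))"
proof -
  show sub: "supp (fin_conv a S x) \<subseteq> (\<lambda>(j, m). j + m) ` (S \<times> supp x)"
  proof
    fix n assume "n \<in> supp (fin_conv a S x)"
    then obtain j where "j \<in> S" "a j * x (n - j) \<noteq> 0"
      unfolding supp_def fin_conv_def by (auto intro: sum.not_neutral_contains_not_neutral)
    then show "n \<in> (\<lambda>(j, m). j + m) ` (S \<times> supp x)"
      by (intro image_eqI[of _ _ "(j, n - j)"]) (auto simp: supp_def)
  qed
  show "finite (supp (fin_conv a S x))"
    by (rule finite_subset[OF sub]) (use assms in auto)
qed

lemma filt_ft_fin_conv:
  assumes S: "finite S" and x: "finite (supp x)"
  shows "filt_ft (fin_conv a S x) k = trig_poly a S k * filt_ft x k"
proof -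
  define B where "B = (\<lambda>(j, m). j + m) ` (S \<times> supp x)"
  have fB: "finite B" unfolding B_def using S x by simp
  have inner: "(\<Sum>n\<in>B. x (n - j) * exp (- \<i> * of_int (n - j) * of_real k)) = filt_ft x k"
    if j: "j \<in> S" for j
  proof -
    have inj: "inj_on (\<lambda>n. n - j) B" by (auto simp: inj_on_def)
    have "supp x \<subseteq> (\<lambda>n. n - j) ` B"
      using j unfolding B_def by (auto intro!: image_eqI[of _ _ "j + _"])
    then have "trig_poly x ((\<lambda>n. n - j) ` B) k = filt_ft x k"
      using fB by (intro trig_poly_superset_supp) auto
    then show ?thesis unfolding trig_poly_def by (simp add: sum.reindex[OF inj])
  qed
  have split: "a j * x (n - j) * exp (- \<i> * of_int n * of_real k)
      = a j * exp (- \<i> * of_int j * of_real k) * (x (n - j) * exp (- \<i> * of_int (n - j) * of_real k))"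
    for n j
    by (simp add: exp_add[symmetric] algebra_simps)
  have "filt_ft (fin_conv a S x) k = trig_poly (fin_conv a S x) B k"
    by (rule trig_poly_superset_supp[symmetric]) (use fB supp_fin_conv[OF S x] in \<open>auto simp: B_def\<close>)
  also have "\<dots> = (\<Sum>j\<in>S. a j * exp (- \<i> * of_int j * of_real k)
                      * (\<Sum>n\<in>B. x (n - j) * exp (- \<i> * of_int (n - j) * of_real k)))"
    unfolding trig_poly_def fin_conv_def sum_distrib_right sum_distrib_left split
    by (rule sum.swap)
  also have "\<dots> = trig_poly a S k * filt_ft x k"
    unfolding trig_poly_def sum_distrib_right by (intro sum.cong refl) (simp only: inner)
  finally show ?thesis .
qed

lemma supp_up: "supp (up x) = (\<lambda>m. 2 * m) ` supp x"
  unfolding supp_def up_def by (auto elim!: evenE)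

lemma filt_ft_up: "filt_ft (up x) k = filt_ft x (2 * k)"
proof -
  have inj: "inj_on (\<lambda>m::int. 2 * m) (supp x)" by (auto simp: inj_on_def)
  show ?thesis
    unfolding filt_ft_eq_trig_poly trig_poly_def supp_up sum.reindex[OF inj]
    by (intro sum.cong refl) (simp add: up_def algebra_simps)
qed

lemma mult_finite_supp:
  assumes "bdd_measurable \<theta>" "finite (supp u)"
  shows "mult \<theta> u n = fcoeff (\<lambda>k. \<theta> k * filt_ft u k) n"
proof -
  have inj: "inj_on (\<lambda>m. n - m) (supp u)" by (auto simp: inj_on_def)
  have "mult \<theta> u n = (\<Sum>\<^sub>\<infinity>j\<in>(\<lambda>m. n - m) ` supp u. fcoeff \<theta> j * u (n - j))"
    unfolding mult_def by (rule infsum_cong_neutral) (auto simp: supp_def image_iff)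
  also have "\<dots> = (\<Sum>m\<in>supp u. u m * fcoeff \<theta> (n - m))"
    using assms(2) by (simp add: sum.reindex[OF inj] mult.commute)
  also have "\<dots> = fcoeff (\<lambda>k. \<theta> k * filt_ft u k) n"
    unfolding filt_ft_eq_trig_poly by (rule fcoeff_mult_trig_poly[symmetric]) (rule assms(1))
  finally show ?thesis .
qed

text \<open>The column \<open>l = m + 1\<close> of \<open>W\<^sub>g\<^sup>\<dagger>\<close>; it does not depend on the truncation level.\<close>
definition wavelet_col :: "(int \<Rightarrow> complex) \<Rightarrow> nat \<Rightarrow> (int \<Rightarrow> complex) \<Rightarrow> int \<Rightarrow> complex" where
  "wavelet_col g m x = ((mult (filt_ft g) \<circ> up) ^^ m) (mult (wav_ft g) (up x))"

definition cascade :: "(int \<Rightarrow> complex) \<Rightarrow> nat \<Rightarrow> real \<Rightarrow> complex" where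
  "cascade g m k = (\<Prod>j<m. filt_ft g (2 ^ j * k))"

text \<open>The Fourier transform of \<open>wavelet_col h m f\<close> when \<open>f\<close> has Fourier transform \<open>F\<close>.\<close>
definition col_ft :: "(int \<Rightarrow> complex) \<Rightarrow> (real \<Rightarrow> complex) \<Rightarrow> nat \<Rightarrow> real \<Rightarrow> complex" where
  "col_ft h F m t = cascade h m t * wav_ft h (2 ^ m * t) * F (2 ^ (m + 1) * t)"

lemma cascade_0 [simp]: "cascade g 0 k = 1"
  by (simp add: cascade_def)

lemma cascade_Suc: "cascade g (Suc m) k = filt_ft g k * cascade g m (2 * k)"
  unfolding cascade_def prod.lessThan_Suc_shift by (simp add: ac_simps)

lemma cascade_Suc_right: "cascade g (Suc m) k = cascade g m k * filt_ft g (2 ^ m * k)"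
  unfolding cascade_def by simp

lemma bdd_measurable_cascade [intro]: "bdd_measurable (cascade g m)"
  unfolding cascade_def[abs_def] by (induction m) (auto intro!: bdd_measurable_mult)

lemma periodic_2pi_cascade: "periodic_2pi (cascade g m)"
  unfolding cascade_def[abs_def]
  by (induction m) (simp_all add: periodic_2pi_const periodic_2pi_mult periodic_2pi_scale_pow2 periodic_2pi_filt_ft)

lemma bdd_measurable_col_ft [intro]: "bdd_measurable F \<Longrightarrow> bdd_measurable (col_ft h F m)"
  unfolding col_ft_def[abs_def] by (intro bdd_measurable_mult bdd_measurable_scale) auto

lemma periodic_2pi_col_ft: "periodic_2pi F \<Longrightarrow> periodic_2pi (col_ft h F m)"
  unfolding col_ft_def[abs_def]
  by (intro periodic_2pi_mult periodic_2pi_cascade periodic_2pi_scale_pow2 periodic_2pi_wav_ft)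

lemma filt_ft_wavelet_col:
  assumes g: "finite (supp g)" and x: "finite (supp x)"
  shows "finite (supp (wavelet_col g m x)) \<and> filt_ft (wavelet_col g m x) = col_ft g (filt_ft x) m"
proof (induction m)
  case 0
  have up: "finite (supp (up x))" using x by (simp add: supp_up)
  have "wavelet_col g 0 x = fin_conv (wav_coeff g) (wav_supp g) (up x)"
    by (simp add: wavelet_col_def mult_wav_ft[OF g])
  then show ?case
    using supp_fin_conv(2)[OF finite_wav_supp[OF g] up] filt_ft_fin_conv[OF finite_wav_supp[OF g] up]
    by (simp add: col_ft_def filt_ft_up wav_ft_eq_trig_poly fun_eq_iff)
next
  case (Suc m)
  then have up: "finite (supp (up (wavelet_col g m x)))" by (simp add: supp_up)
  have col: "wavelet_col g (Suc m) x = fin_conv g (supp g) (up (wavelet_col g m x))"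
    by (simp add: wavelet_col_def mult_filt_ft[OF g])
  have "filt_ft (wavelet_col g (Suc m) x) k = col_ft g (filt_ft x) (Suc m) k" for k
  proof -
    have "filt_ft (wavelet_col g (Suc m) x) k = filt_ft g k * filt_ft (wavelet_col g m x) (2 * k)"
      unfolding col using filt_ft_fin_conv[OF g up, of g k]
      by (simp only: filt_ft_up filt_ft_eq_trig_poly[symmetric])
    also have "\<dots> = col_ft g (filt_ft x) (Suc m) k"
      using Suc by (simp add: col_ft_def cascade_Suc algebra_simps)
    finally show ?thesis .
  qed
  then show ?case unfolding col using supp_fin_conv(2)[OF g up] by auto
qed

section \<open>The function \<open>\<theta>\<^sub>w\<close> and the defects\<close>

lemma theta_w_norm_le: "cmod (theta_w k) \<le> 1"
  unfolding theta_w_def Let_def by (simp add: norm_mult abs_sgn_eq)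

lemma bdd_measurable_theta_w [intro]: "bdd_measurable theta_w"
proof -
  have "theta_w \<in> borel_measurable borel"
    unfolding theta_w_def Let_def by measurable
  then show ?thesis unfolding bdd_measurable_def using theta_w_norm_le by blast
qed

lemma periodic_2pi_theta_w: "periodic_2pi theta_w"
  unfolding periodic_2pi_def
proof
  fix k :: real
  have "(k + 2 * pi + pi) / (2 * pi) = (k + pi) / (2 * pi) + 1"
    by (simp add: field_simps)
  then have "k + 2 * pi - 2 * pi * of_int \<lfloor>(k + 2 * pi + pi) / (2 * pi)\<rfloor>
      = k - 2 * pi * of_int \<lfloor>(k + pi) / (2 * pi)\<rfloor>"
    by (simp add: algebra_simps)
  then show "theta_w (k + 2 * pi) = theta_w k"
    by (simp only: theta_w_def Let_def)
qed

lemma theta_w_reduce: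
  fixes z :: int
  assumes "of_int z * (2 * pi) - pi \<le> k" "k < of_int z * (2 * pi) + pi"
  shows "theta_w k = - \<i> * of_real (sgn (k - 2 * pi * of_int z)) * cis ((k - 2 * pi * of_int z) / 2)"
proof -
  have "\<lfloor>(k + pi) / (2 * pi)\<rfloor> = z"
    using assms pi_gt_zero by (intro floor_unique) (simp_all add: field_simps)
  then show ?thesis unfolding theta_w_def Let_def by (simp add: cis_conv_exp)
qed

lemma theta_w_eq:
  assumes "-pi < k" "k < pi"
  shows "theta_w k = - \<i> * of_real (sgn k) * cis (k / 2)"
  using theta_w_reduce[of 0 k] assms by simp

text \<open>This is how the half-sample shift \<open>e^(ik/2)\<close> of the hypothesis enters.\<close>
lemma theta_w_double:
  assumes k: "-pi < k" "k < pi"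
  shows "theta_w (2 * k) = theta_w k * cis (k / 2)"
proof -
  have rhs: "theta_w k * cis (k / 2) = - \<i> * of_real (sgn k) * cis k"
    using theta_w_eq[OF k] by (simp add: mult.assoc cis_mult)
  consider "-pi/2 \<le> k \<and> k < pi/2" | "pi/2 \<le> k" | "k < -pi/2" by linarith
  then show ?thesis
  proof cases
    case 1
    then show ?thesis using theta_w_reduce[of 0 "2 * k"] rhs by (simp add: sgn_mult)
  next
    case 2
    then have "0 < k" using pi_gt_zero by linarith
    moreover have "cis ((2 * k - 2 * pi) / 2) = - cis k"
      by (simp add: diff_divide_distrib cis_divide[symmetric] cis_pi)
    ultimately show ?thesis using theta_w_reduce[of 1 "2 * k"] k 2 rhs by simp
  next
    case 3
    then have "k < 0" using pi_gt_zero by linarith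
    moreover have "cis ((2 * k + 2 * pi) / 2) = - cis k"
      by (simp add: add_divide_distrib cis_mult[symmetric] cis_pi)
    ultimately show ?thesis using theta_w_reduce[of "-1" "2 * k"] k 3 rhs by simp
  qed
qed

lemma theta_w_eq_cis_shift:
  assumes "-pi < k" "k < pi" "k \<noteq> 0"
  shows "theta_w k = cis ((k - sgn k * pi) / 2)"
proof (cases "0 < k")
  case True
  have "cis ((k - pi) / 2) = cis (k / 2) * cis (- (pi / 2))"
    unfolding cis_mult by (simp add: diff_divide_distrib)
  then show ?thesis using True theta_w_eq[OF assms(1,2)] by simp
next
  case False
  then have "k < 0" using assms(3) by simp
  have "cis ((k + pi) / 2) = cis (k / 2) * cis (pi / 2)"
    unfolding cis_mult by (simp add: add_divide_distrib)
  then show ?thesis using \<open>k < 0\<close> theta_w_eq[OF assms(1,2)] by simp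
qed

definition scaling_defect :: "(int \<Rightarrow> complex) \<Rightarrow> (int \<Rightarrow> complex) \<Rightarrow> real \<Rightarrow> complex" where
  "scaling_defect g h t = filt_ft g t * theta_w (2 * t) - theta_w t * filt_ft h t"

definition wavelet_defect :: "(int \<Rightarrow> complex) \<Rightarrow> (int \<Rightarrow> complex) \<Rightarrow> real \<Rightarrow> complex" where
  "wavelet_defect g h t = wav_ft g t - theta_w t * wav_ft h t"

lemma bdd_measurable_scaling_defect [intro]: "bdd_measurable (scaling_defect g h)"
  unfolding scaling_defect_def[abs_def] by (intro bdd_measurable_diff bdd_measurable_mult) auto

lemma bdd_measurable_wavelet_defect [intro]: "bdd_measurable (wavelet_defect g h)"
  unfolding wavelet_defect_def[abs_def] by (intro bdd_measurable_diff bdd_measurable_mult) auto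

lemma periodic_2pi_scaling_defect: "periodic_2pi (scaling_defect g h)"
  unfolding scaling_defect_def[abs_def]
  by (intro periodic_2pi_diff periodic_2pi_mult periodic_2pi_filt_ft periodic_2pi_theta_w
      periodic_2pi_scale2[of theta_w])

lemma periodic_2pi_wavelet_defect: "periodic_2pi (wavelet_defect g h)"
  unfolding wavelet_defect_def[abs_def]
  by (intro periodic_2pi_diff periodic_2pi_mult periodic_2pi_wav_ft periodic_2pi_theta_w)

lemma scaling_defect_bound:
  assumes close: "\<forall>k\<in>{-pi<..<pi}. cmod (filt_ft h k - exp (\<i> * of_real (k / 2)) * filt_ft g k) \<le> \<epsilon>"
    and k: "-pi < k" "k < pi"
  shows "cmod (scaling_defect g h k) \<le> \<epsilon>"
proof -
  have "scaling_defect g h k = - theta_w k * (filt_ft h k - cis (k / 2) * filt_ft g k)"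
    unfolding scaling_defect_def theta_w_double[OF k] by (simp add: algebra_simps)
  then have "cmod (scaling_defect g h k) = cmod (theta_w k) * cmod (filt_ft h k - cis (k / 2) * filt_ft g k)"
    by (simp add: norm_mult)
  also have "\<dots> \<le> cmod (filt_ft h k - cis (k / 2) * filt_ft g k)"
    by (rule mult_left_le_one_le) (simp_all add: theta_w_norm_le)
  also have "\<dots> \<le> \<epsilon>" using close k by (auto simp: cis_conv_exp)
  finally show ?thesis .
qed

lemma wavelet_defect_bound:
  assumes close: "\<forall>k\<in>{-pi<..<pi}. cmod (filt_ft h k - exp (\<i> * of_real (k / 2)) * filt_ft g k) \<le> \<epsilon>"
    and k: "-pi < k" "k < pi" "k \<noteq> 0"
  shows "cmod (wavelet_defect g h k) \<le> \<epsilon>"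
proof -
  define k' where "k' = k - sgn k * pi"
  have k': "-pi < k'" "k' < pi" using k unfolding k'_def by (auto simp: sgn_if)
  have shift: "filt_ft f (k + pi) = filt_ft f k'" for f
  proof (cases "0 < k")
    case True
    then have "k + pi = k' + 2 * pi" unfolding k'_def by simp
    then show ?thesis using periodic_2pi_filt_ft[of f] unfolding periodic_2pi_def by metis
  next
    case False
    then show ?thesis using k(3) unfolding k'_def by simp
  qed
  have unit: "cis (k' / 2) * cnj (cis (k' / 2)) = 1"
    by (simp add: cis_cnj cis_mult)
  have "cis k * cis (k' / 2) * cnj (cis (k' / 2) * filt_ft g k' - filt_ft h k')
      = cis k * (cis (k' / 2) * cnj (cis (k' / 2))) * cnj (filt_ft g k') - cis (k' / 2) * (cis k * cnj (filt_ft h k'))"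
    by (simp add: algebra_simps)
  also have "\<dots> = wavelet_defect g h k"
    unfolding unit wavelet_defect_def wav_ft_def theta_w_eq_cis_shift[OF k] k'_def[symmetric] shift
    by (simp add: cis_conv_exp)
  finally have "wavelet_defect g h k = cis k * cis (k' / 2) * cnj (cis (k' / 2) * filt_ft g k' - filt_ft h k')"
    by simp
  then have "cmod (wavelet_defect g h k) = cmod (cis (k' / 2) * filt_ft g k' - filt_ft h k')"
    by (simp only: norm_mult norm_cis complex_mod_cnj mult_1)
  also have "\<dots> = cmod (filt_ft h k' - cis (k' / 2) * filt_ft g k')"
    by (rule norm_minus_commute)
  also have "\<dots> \<le> \<epsilon>" using close k' by (auto simp: cis_conv_exp)
  finally show ?thesis .
qed

text \<open>Commuting \<open>\<theta>\<^sub>w\<close> through the cascade one factor at a time costs one scaling defect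
  per factor.\<close>
lemma theta_w_cascade_telescope:
  "theta_w k * cascade h m k = cascade g m k * theta_w (2 ^ m * k)
     - (\<Sum>j<m. cascade g j k * scaling_defect g h (2 ^ j * k) * cascade h (m - 1 - j) (2 ^ (j + 1) * k))"
proof (induction m arbitrary: k)
  case (Suc m)
  have "(\<Sum>j<Suc m. cascade g j k * scaling_defect g h (2 ^ j * k) * cascade h (Suc m - 1 - j) (2 ^ (j + 1) * k))
      = scaling_defect g h k * cascade h m (2 * k)
        + filt_ft g k * (\<Sum>j<m. cascade g j (2 * k) * scaling_defect g h (2 ^ j * (2 * k))
                                  * cascade h (m - 1 - j) (2 ^ (j + 1) * (2 * k)))"
    unfolding sum.lessThan_Suc_shift sum_distrib_left
    by (simp add: cascade_Suc algebra_simps)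
  moreover have "theta_w k * cascade h (Suc m) k
      = filt_ft g k * (theta_w (2 * k) * cascade h m (2 * k)) - scaling_defect g h k * cascade h m (2 * k)"
    by (simp add: cascade_Suc scaling_defect_def algebra_simps)
  ultimately show ?case
    unfolding Suc.IH[of "2 * k"] by (simp add: cascade_Suc algebra_simps)
qed simp

definition defect_term ::
    "(int \<Rightarrow> complex) \<Rightarrow> (int \<Rightarrow> complex) \<Rightarrow> (real \<Rightarrow> complex) \<Rightarrow> nat \<Rightarrow> nat \<Rightarrow> real \<Rightarrow> complex" where
  "defect_term g h F m j t =
     (if j < m then scaling_defect g h t * col_ft h F (m - 1 - j) (2 * t) else wavelet_defect g h t * F (2 * t))"

lemma bdd_measurable_defect_term [intro]: "bdd_measurable F \<Longrightarrow> bdd_measurable (defect_term g h F m j)"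
  unfolding defect_term_def[abs_def] by (cases "j < m") (auto intro!: bdd_measurable_mult bdd_measurable_scale)

lemma col_ft_diff_eq_sum:
  "col_ft g F m k - theta_w k * col_ft h F m k = (\<Sum>j<Suc m. cascade g j k * defect_term g h F m j (2 ^ j * k))"
proof -
  define W where "W = wav_ft h (2 ^ m * k) * F (2 ^ (m + 1) * k)"
  have below: "cascade g j k * defect_term g h F m j (2 ^ j * k)
      = cascade g j k * scaling_defect g h (2 ^ j * k) * cascade h (m - 1 - j) (2 ^ (j + 1) * k) * W"
    if "j < m" for j
  proof -
    obtain q where m: "m = Suc (j + q)" using \<open>j < m\<close> less_iff_Suc_add by auto
    show ?thesis
      unfolding defect_term_def col_ft_def W_def m by (simp add: power_add algebra_simps)
  qed
  have "(\<Sum>j<Suc m. cascade g j k * defect_term g h F m j (2 ^ j * k))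
      = (\<Sum>j<m. cascade g j k * defect_term g h F m j (2 ^ j * k))
        + cascade g m k * defect_term g h F m m (2 ^ m * k)"
    by (rule sum.lessThan_Suc)
  also have "(\<Sum>j<m. cascade g j k * defect_term g h F m j (2 ^ j * k))
      = (\<Sum>j<m. cascade g j k * scaling_defect g h (2 ^ j * k) * cascade h (m - 1 - j) (2 ^ (j + 1) * k)) * W"
    unfolding sum_distrib_right by (rule sum.cong[OF refl], rule below, simp)
  also have "cascade g m k * defect_term g h F m m (2 ^ m * k)
      = cascade g m k * wavelet_defect g h (2 ^ m * k) * F (2 ^ (m + 1) * k)"
    by (simp add: defect_term_def mult.assoc)
  also have "(\<Sum>j<m. cascade g j k * scaling_defect g h (2 ^ j * k) * cascade h (m - 1 - j) (2 ^ (j + 1) * k))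
      = cascade g m k * theta_w (2 ^ m * k) - theta_w k * cascade h m k"
    using theta_w_cascade_telescope[of k h m g] by simp
  also have "(cascade g m k * theta_w (2 ^ m * k) - theta_w k * cascade h m k) * W
      + cascade g m k * wavelet_defect g h (2 ^ m * k) * F (2 ^ (m + 1) * k)
      = col_ft g F m k - theta_w k * col_ft h F m k"
    by (simp add: col_ft_def wavelet_defect_def W_def algebra_simps)
  finally show ?thesis by simp
qed

section \<open>Square norms on [-\<pi>, \<pi>]\<close>

definition circle_sqnorm :: "(real \<Rightarrow> complex) \<Rightarrow> real" where
  "circle_sqnorm \<Phi> = (LINT k:{-pi..pi}|lborel. (cmod (\<Phi> k))\<^sup>2)"

definition qmf_condition :: "(real \<Rightarrow> complex) \<Rightarrow> bool" where
  "qmf_condition a \<longleftrightarrow> (\<forall>s. (cmod (a s))\<^sup>2 + (cmod (a (s + pi)))\<^sup>2 = 2)"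

lemma circle_sqnorm_mult_scale2:
  assumes "bdd_measurable a" "periodic_2pi a" "qmf_condition a"
    and "bdd_measurable \<Psi>" "periodic_2pi \<Psi>"
  shows "circle_sqnorm (\<lambda>k. a k * \<Psi> (2 * k)) = circle_sqnorm \<Psi>"
  unfolding circle_sqnorm_def norm_mult power_mult_distrib
  using assms unfolding qmf_condition_def
  by (intro set_integral_mult_scale2_eq) (auto intro: periodic_2pi_comp)

lemma circle_sqnorm_scale2:
  "bdd_measurable \<Psi> \<Longrightarrow> periodic_2pi \<Psi> \<Longrightarrow> circle_sqnorm (\<lambda>k. \<Psi> (2 * k)) = circle_sqnorm \<Psi>"
  using circle_sqnorm_mult_scale2[of "\<lambda>_. 1" \<Psi>] by (simp add: qmf_condition_def periodic_2pi_const)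

lemma qmf_condition_wav_ft:
  assumes "qmf_condition (filt_ft h)" shows "qmf_condition (wav_ft h)"
proof -
  have "cmod (wav_ft h s) = cmod (filt_ft h (s + pi))" for s
    unfolding wav_ft_def by (simp add: norm_mult norm_exp_i_times)
  moreover have "filt_ft h (s + pi + pi) = filt_ft h s" for s
    using periodic_2pi_filt_ft[of h] unfolding periodic_2pi_def by (simp add: add.assoc)
  ultimately show ?thesis using assms unfolding qmf_condition_def by (simp add: add.commute)
qed

lemma circle_sqnorm_cascade:
  assumes g: "qmf_condition (filt_ft g)"
  shows "bdd_measurable \<Psi> \<Longrightarrow> periodic_2pi \<Psi> \<Longrightarrow>
    circle_sqnorm (\<lambda>k. cascade g j k * \<Psi> (2 ^ j * k)) = circle_sqnorm \<Psi>"
proof (induction j arbitrary: \<Psi>)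
  case (Suc j)
  define \<Psi>' where "\<Psi>' t = filt_ft g t * \<Psi> (2 * t)" for t
  have "bdd_measurable \<Psi>'" "periodic_2pi \<Psi>'"
    unfolding \<Psi>'_def[abs_def] using Suc.prems
    by (auto intro!: bdd_measurable_mult periodic_2pi_mult periodic_2pi_filt_ft periodic_2pi_scale2)
  moreover have "(\<lambda>k. cascade g (Suc j) k * \<Psi> (2 ^ Suc j * k)) = (\<lambda>k. cascade g j k * \<Psi>' (2 ^ j * k))"
    unfolding \<Psi>'_def cascade_Suc_right by (simp add: algebra_simps)
  ultimately have "circle_sqnorm (\<lambda>k. cascade g (Suc j) k * \<Psi> (2 ^ Suc j * k)) = circle_sqnorm \<Psi>'"
    using Suc.IH by simp
  also have "\<dots> = circle_sqnorm \<Psi>"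
    unfolding \<Psi>'_def[abs_def] using g Suc.prems
    by (intro circle_sqnorm_mult_scale2) (auto intro: periodic_2pi_filt_ft)
  finally show ?case .
qed simp

lemma circle_sqnorm_col_ft:
  assumes h: "qmf_condition (filt_ft h)" and F: "bdd_measurable F" "periodic_2pi F"
  shows "circle_sqnorm (col_ft h F q) = circle_sqnorm F"
proof -
  define \<Psi> where "\<Psi> s = wav_ft h s * F (2 * s)" for s
  have "bdd_measurable \<Psi>" "periodic_2pi \<Psi>"
    unfolding \<Psi>_def[abs_def] using F
    by (auto intro!: bdd_measurable_mult periodic_2pi_mult periodic_2pi_wav_ft periodic_2pi_scale2)
  moreover have "col_ft h F q = (\<lambda>t. cascade h q t * \<Psi> (2 ^ q * t))"
    unfolding col_ft_def[abs_def] \<Psi>_def by (simp add: algebra_simps)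
  ultimately have "circle_sqnorm (col_ft h F q) = circle_sqnorm \<Psi>"
    using circle_sqnorm_cascade[OF h] by simp
  also have "\<dots> = circle_sqnorm F"
    unfolding \<Psi>_def[abs_def] using h F
    by (intro circle_sqnorm_mult_scale2) (auto intro: periodic_2pi_wav_ft qmf_condition_wav_ft)
  finally show ?thesis .
qed

lemma circle_sqnorm_mult_scale2_le:
  assumes D: "bdd_measurable D" and \<Phi>: "bdd_measurable \<Phi>" "periodic_2pi \<Phi>"
    and D_le: "\<And>k. -pi < k \<Longrightarrow> k < pi \<Longrightarrow> k \<noteq> 0 \<Longrightarrow> cmod (D k) \<le> \<epsilon>"
  shows "circle_sqnorm (\<lambda>k. D k * \<Phi> (2 * k)) \<le> \<epsilon>\<^sup>2 * circle_sqnorm \<Phi>"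
proof -
  have "circle_sqnorm (\<lambda>k. D k * \<Phi> (2 * k))
      = (LINT k:{-pi..pi}|lborel. (cmod (D k))\<^sup>2 * (cmod (\<Phi> (2 * k)))\<^sup>2)"
    unfolding circle_sqnorm_def by (simp add: norm_mult power_mult_distrib)
  also have "\<dots> \<le> (LINT k:{-pi..pi}|lborel. \<epsilon>\<^sup>2 * (cmod (\<Phi> (2 * k)))\<^sup>2)"
  proof (rule set_integral_mono_AE)
    show "set_integrable lborel {-pi..pi} (\<lambda>k. (cmod (D k))\<^sup>2 * (cmod (\<Phi> (2 * k)))\<^sup>2)"
      "set_integrable lborel {-pi..pi} (\<lambda>k. \<epsilon>\<^sup>2 * (cmod (\<Phi> (2 * k)))\<^sup>2)"
      using D \<Phi> by (auto intro!: bdd_measurable_set_integrable bdd_measurable_mult)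
    have "AE k in lborel. k \<noteq> -pi \<and> k \<noteq> pi \<and> k \<noteq> 0"
      using AE_lborel_singleton[of pi] AE_lborel_singleton[of "-pi"] AE_lborel_singleton[of 0]
      by eventually_elim auto
    then show "AE k\<in>{-pi..pi} in lborel. (cmod (D k))\<^sup>2 * (cmod (\<Phi> (2 * k)))\<^sup>2 \<le> \<epsilon>\<^sup>2 * (cmod (\<Phi> (2 * k)))\<^sup>2"
      by eventually_elim (auto intro!: mult_right_mono power_mono D_le)
  qed
  also have "\<dots> = \<epsilon>\<^sup>2 * circle_sqnorm (\<lambda>k. \<Phi> (2 * k))"
    unfolding circle_sqnorm_def by simp
  also have "\<dots> = \<epsilon>\<^sup>2 * circle_sqnorm \<Phi>" by (simp add: circle_sqnorm_scale2 \<Phi>)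
  finally show ?thesis .
qed

lemma norm_sum_power2_le:
  fixes z :: "'i \<Rightarrow> 'a::real_normed_vector"
  shows "(norm (\<Sum>j\<in>A. z j))\<^sup>2 \<le> real (card A) * (\<Sum>j\<in>A. (norm (z j))\<^sup>2)"
proof -
  have "(norm (\<Sum>j\<in>A. z j))\<^sup>2 \<le> (\<Sum>j\<in>A. norm (z j))\<^sup>2"
    by (intro power_mono norm_sum) simp
  also have "\<dots> \<le> (\<Sum>j\<in>A. (norm (z j))\<^sup>2) * real (card A)"
    by (rule sum_squared_le_sum_of_squares)
  finally show ?thesis by (simp add: mult.commute)
qed

lemma circle_sqnorm_sum_le:
  assumes "\<And>j. j \<in> A \<Longrightarrow> bdd_measurable (T j)"
  shows "circle_sqnorm (\<lambda>k. \<Sum>j\<in>A. T j k) \<le> real (card A) * (\<Sum>j\<in>A. circle_sqnorm (T j))"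
proof -
  have "circle_sqnorm (\<lambda>k. \<Sum>j\<in>A. T j k) \<le> (LINT k:{-pi..pi}|lborel. real (card A) * (\<Sum>j\<in>A. (cmod (T j k))\<^sup>2))"
    unfolding circle_sqnorm_def using assms
    by (intro set_integral_mono norm_sum_power2_le)
      (auto intro!: bdd_measurable_set_integrable bdd_measurable_mult bdd_measurable_sum bdd_measurable_norm_power2)
  also have "\<dots> = real (card A) * (\<Sum>j\<in>A. circle_sqnorm (T j))"
    unfolding circle_sqnorm_def set_integral_mult_right using assms
    by (subst set_integral_sum) (auto intro: bdd_measurable_set_integrable)
  finally show ?thesis .
qed

lemma circle_sqnorm_defect_term:
  assumes g: "qmf_condition (filt_ft g)" and h: "qmf_condition (filt_ft h)"
    and close: "\<forall>k\<in>{-pi<..<pi}. cmod (filt_ft h k - exp (\<i> * of_real (k / 2)) * filt_ft g k) \<le> \<epsilon>"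
    and F: "bdd_measurable F" "periodic_2pi F"
  shows "circle_sqnorm (\<lambda>k. cascade g j k * defect_term g h F m j (2 ^ j * k)) \<le> \<epsilon>\<^sup>2 * circle_sqnorm F"
proof (cases "j < m")
  case True
  then have "defect_term g h F m j = (\<lambda>t. scaling_defect g h t * col_ft h F (m - 1 - j) (2 * t))"
    unfolding defect_term_def by auto
  moreover have "circle_sqnorm (\<lambda>t. scaling_defect g h t * col_ft h F (m - 1 - j) (2 * t))
      \<le> \<epsilon>\<^sup>2 * circle_sqnorm (col_ft h F (m - 1 - j))"
    using F scaling_defect_bound[OF close] by (intro circle_sqnorm_mult_scale2_le) (auto intro: periodic_2pi_col_ft)
  ultimately show ?thesis
    using F circle_sqnorm_col_ft[OF h F]
    by (subst circle_sqnorm_cascade[OF g]) (auto intro!: periodic_2pi_mult periodic_2pi_scaling_defect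
        periodic_2pi_col_ft periodic_2pi_scale2 bdd_measurable_mult)
next
  case False
  then have "defect_term g h F m j = (\<lambda>t. wavelet_defect g h t * F (2 * t))"
    unfolding defect_term_def by auto
  moreover have "circle_sqnorm (\<lambda>t. wavelet_defect g h t * F (2 * t)) \<le> \<epsilon>\<^sup>2 * circle_sqnorm F"
    using F wavelet_defect_bound[OF close] by (intro circle_sqnorm_mult_scale2_le) auto
  ultimately show ?thesis
    using F by (subst circle_sqnorm_cascade[OF g]) (auto intro!: periodic_2pi_mult periodic_2pi_wavelet_defect
        periodic_2pi_scale2 bdd_measurable_mult)
qed

lemma circle_sqnorm_col_ft_diff:
  assumes g: "qmf_condition (filt_ft g)" and h: "qmf_condition (filt_ft h)"
    and close: "\<forall>k\<in>{-pi<..<pi}. cmod (filt_ft h k - exp (\<i> * of_real (k / 2)) * filt_ft g k) \<le> \<epsilon>"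
    and F: "bdd_measurable F" "periodic_2pi F"
  shows "circle_sqnorm (\<lambda>k. col_ft g F m k - theta_w k * col_ft h F m k) \<le> (real (Suc m))\<^sup>2 * \<epsilon>\<^sup>2 * circle_sqnorm F"
proof -
  have "circle_sqnorm (\<lambda>k. col_ft g F m k - theta_w k * col_ft h F m k)
      \<le> real (card {..<Suc m}) * (\<Sum>j<Suc m. circle_sqnorm (\<lambda>k. cascade g j k * defect_term g h F m j (2 ^ j * k)))"
    unfolding col_ft_diff_eq_sum using F
    by (intro circle_sqnorm_sum_le) (auto intro!: bdd_measurable_mult bdd_measurable_scale)
  also have "\<dots> \<le> real (Suc m) * (\<Sum>j<Suc m. \<epsilon>\<^sup>2 * circle_sqnorm F)"
    by (simp only: card_lessThan) (intro mult_left_mono sum_mono circle_sqnorm_defect_term[OF g h close F]; simp)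
  also have "\<dots> = (real (Suc m))\<^sup>2 * \<epsilon>\<^sup>2 * circle_sqnorm F"
    by (simp add: power2_eq_square)
  finally show ?thesis .
qed

section \<open>Square-summable sequences\<close>

definition l2_sqnorm :: "('a \<Rightarrow> complex) \<Rightarrow> real" where
  "l2_sqnorm x = (\<Sum>\<^sub>\<infinity>n. (cmod (x n))\<^sup>2)"

lemma l2norm_eq_sqrt: "l2norm x = sqrt (l2_sqnorm x)"
  unfolding l2norm_def l2_sqnorm_def ..

lemma l2_sqnorm_nonneg: "0 \<le> l2_sqnorm x"
  unfolding l2_sqnorm_def by (rule infsum_nonneg) simp

lemma finite_sum_le_l2_sqnorm:
  "x \<in> l2_space \<Longrightarrow> finite S \<Longrightarrow> (\<Sum>n\<in>S. (cmod (x n))\<^sup>2) \<le> l2_sqnorm x"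
  unfolding l2_space_def l2_sqnorm_def by (intro finite_sum_le_infsum) auto

lemma l2_space_finite_sums:
  assumes "\<And>S. finite S \<Longrightarrow> (\<Sum>n\<in>S. (cmod (x n))\<^sup>2) \<le> B"
  shows "x \<in> l2_space" and "l2_sqnorm x \<le> B"
proof -
  show l2: "x \<in> l2_space"
    unfolding l2_space_def using assms
    by (auto intro!: nonneg_bdd_above_summable_on bdd_aboveI)
  show "l2_sqnorm x \<le> B"
    unfolding l2_sqnorm_def using l2 assms unfolding l2_space_def by (intro infsum_le_finite_sums) auto
qed

lemma cmod_le_sqrt_l2_sqnorm: "x \<in> l2_space \<Longrightarrow> cmod (x n) \<le> sqrt (l2_sqnorm x)"
  using finite_sum_le_l2_sqnorm[of x "{n}"] by (simp add: real_le_rsqrt)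

lemma l2_sqnorm_finite_supp:
  assumes "finite (supp x)"
  shows "l2_sqnorm x = (\<Sum>n\<in>supp x. (cmod (x n))\<^sup>2)"
proof -
  have "l2_sqnorm x = (\<Sum>\<^sub>\<infinity>n\<in>supp x. (cmod (x n))\<^sup>2)"
    unfolding l2_sqnorm_def by (rule infsum_cong_neutral) (auto simp: supp_def)
  then show ?thesis using assms by simp
qed

lemma l2_space_diff:
  assumes "x \<in> l2_space" "y \<in> l2_space"
  shows "(\<lambda>n. x n - y n) \<in> l2_space"
proof (rule l2_space_finite_sums)
  fix S :: "'a set" assume S: "finite S"
  have "(cmod (a - b))\<^sup>2 \<le> 2 * (cmod a)\<^sup>2 + 2 * (cmod b)\<^sup>2" for a b :: complex
  proof -
    have "(cmod (a - b))\<^sup>2 \<le> (cmod a + cmod b)\<^sup>2"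
      by (intro power_mono norm_triangle_ineq4) simp
    also have "\<dots> \<le> 2 * (cmod a)\<^sup>2 + 2 * (cmod b)\<^sup>2"
      using zero_le_power2[of "cmod a - cmod b"] by (simp add: power2_eq_square algebra_simps)
    finally show ?thesis .
  qed
  then have "(\<Sum>n\<in>S. (cmod (x n - y n))\<^sup>2) \<le> 2 * (\<Sum>n\<in>S. (cmod (x n))\<^sup>2) + 2 * (\<Sum>n\<in>S. (cmod (y n))\<^sup>2)"
    by (simp add: sum_distrib_left sum.distrib[symmetric] sum_mono)
  also have "\<dots> \<le> 2 * l2_sqnorm x + 2 * l2_sqnorm y"
    using S assms by (intro add_mono mult_left_mono finite_sum_le_l2_sqnorm) auto
  finally show "(\<Sum>n\<in>S. (cmod (x n - y n))\<^sup>2) \<le> 2 * l2_sqnorm x + 2 * l2_sqnorm y" .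
qed

lemma l2_space_reflect:
  fixes x :: "int \<Rightarrow> complex"
  assumes "x \<in> l2_space"
  shows "(\<lambda>j. x (n - j)) \<in> l2_space" and "l2_sqnorm (\<lambda>j. x (n - j)) = l2_sqnorm x"
proof -
  have b: "bij_betw (\<lambda>j::int. n - j) UNIV UNIV"
    by (rule bij_betwI[of _ _ _ "\<lambda>j. n - j"]) auto
  show "(\<lambda>j. x (n - j)) \<in> l2_space"
    using summable_on_reindex_bij_betw[OF b, of "\<lambda>m. (cmod (x m))\<^sup>2"] assms
    unfolding l2_space_def by (simp add: o_def)
  show "l2_sqnorm (\<lambda>j. x (n - j)) = l2_sqnorm x"
    using infsum_reindex_bij_betw[OF b, of "\<lambda>m. (cmod (x m))\<^sup>2"] unfolding l2_sqnorm_def by simp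
qed

lemma l2_cauchy_schwarz:
  assumes c: "c \<in> l2_space" and z: "z \<in> l2_space"
  shows "(\<lambda>j. cmod (c j * z j)) summable_on UNIV"
    and "(\<Sum>\<^sub>\<infinity>j. cmod (c j * z j)) \<le> sqrt (l2_sqnorm c) * sqrt (l2_sqnorm z)"
proof -
  have finite_cs: "(\<Sum>j\<in>S. cmod (c j * z j)) \<le> sqrt (l2_sqnorm c) * sqrt (l2_sqnorm z)"
    if S: "finite S" for S
  proof -
    have "(\<Sum>j\<in>S. cmod (c j) * cmod (z j))\<^sup>2 \<le> (\<Sum>j\<in>S. (cmod (c j))\<^sup>2) * (\<Sum>j\<in>S. (cmod (z j))\<^sup>2)"
      by (rule Cauchy_Schwarz_ineq_sum)
    also have "\<dots> \<le> l2_sqnorm c * l2_sqnorm z"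
      using S c z by (intro mult_mono finite_sum_le_l2_sqnorm sum_nonneg l2_sqnorm_nonneg) auto
    finally have "(\<Sum>j\<in>S. cmod (c j) * cmod (z j)) \<le> sqrt (l2_sqnorm c * l2_sqnorm z)"
      by (rule real_le_rsqrt)
    then show ?thesis by (simp add: norm_mult real_sqrt_mult)
  qed
  show sum: "(\<lambda>j. cmod (c j * z j)) summable_on UNIV"
    using finite_cs by (auto intro!: nonneg_bdd_above_summable_on bdd_aboveI)
  show "(\<Sum>\<^sub>\<infinity>j. cmod (c j * z j)) \<le> sqrt (l2_sqnorm c) * sqrt (l2_sqnorm z)"
    using finite_cs by (intro infsum_le_finite_sums[OF sum]) auto
qed

lemma fcoeff_l2_space:
  assumes "bdd_measurable \<theta>" shows "fcoeff \<theta> \<in> l2_space"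
  using bessel_inequality[OF assms] by (rule l2_space_finite_sums)

lemma has_sum_sum:
  fixes f :: "'i \<Rightarrow> 'a \<Rightarrow> 'b::topological_comm_monoid_add"
  assumes "finite A" "\<And>a. a \<in> A \<Longrightarrow> (f a has_sum s a) B"
  shows "((\<lambda>x. \<Sum>a\<in>A. f a x) has_sum (\<Sum>a\<in>A. s a)) B"
  using assms
proof (induction A rule: finite_induct)
  case (insert a A)
  then have "((\<lambda>x. f a x + (\<Sum>a\<in>A. f a x)) has_sum s a + sum s A) B"
    by (intro has_sum_add) auto
  with insert.hyps show ?case by simp
qed simp

lemma has_sum_mult:
  assumes "fcoeff \<theta> \<in> l2_space" "x \<in> l2_space"
  shows "((\<lambda>j. fcoeff \<theta> j * x (n - j)) has_sum mult \<theta> x n) UNIV"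
proof -
  have "(\<lambda>j. fcoeff \<theta> j * x (n - j)) summable_on UNIV"
    using l2_cauchy_schwarz(1)[OF assms(1) l2_space_reflect(1)[OF assms(2)]]
    by (rule abs_summable_summable)
  then show ?thesis unfolding mult_def by (simp add: has_sum_infsum)
qed

lemma mult_sum:
  assumes "fcoeff \<theta> \<in> l2_space" "finite A" "\<And>a. a \<in> A \<Longrightarrow> u a \<in> l2_space"
  shows "mult \<theta> (\<lambda>n. \<Sum>a\<in>A. u a n) n = (\<Sum>a\<in>A. mult \<theta> (u a) n)"
  using has_sum_sum[OF assms(2) has_sum_mult[OF assms(1) assms(3)]]
  unfolding mult_def sum_distrib_left by (rule infsumI)

lemma mult_diff:
  assumes "fcoeff \<theta> \<in> l2_space" "x \<in> l2_space" "y \<in> l2_space"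
  shows "mult \<theta> (\<lambda>i. x i - y i) n = mult \<theta> x n - mult \<theta> y n"
  using has_sum_add[OF has_sum_mult[OF assms(1,2)] has_sum_uminusI[OF has_sum_mult[OF assms(1,3)]]]
  unfolding mult_def by (intro infsumI) (simp add: right_diff_distrib)

lemma mult_diff_bound:
  assumes "fcoeff \<theta> \<in> l2_space" "x \<in> l2_space" "y \<in> l2_space"
  shows "cmod (mult \<theta> x n - mult \<theta> y n) \<le> sqrt (l2_sqnorm (fcoeff \<theta>)) * sqrt (l2_sqnorm (\<lambda>i. x i - y i))"
proof -
  define z where "z i = x i - y i" for i
  have z: "z \<in> l2_space" unfolding z_def[abs_def] by (rule l2_space_diff[OF assms(2,3)])
  have "cmod (mult \<theta> x n - mult \<theta> y n) = cmod (\<Sum>\<^sub>\<infinity>j. fcoeff \<theta> j * z (n - j))"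
    unfolding mult_diff[OF assms, symmetric] by (simp add: mult_def z_def)
  also have "\<dots> \<le> (\<Sum>\<^sub>\<infinity>j. cmod (fcoeff \<theta> j * z (n - j)))"
    using l2_cauchy_schwarz(1)[OF assms(1) l2_space_reflect(1)[OF z]] by (intro norm_infsum_bound) simp
  also have "\<dots> \<le> sqrt (l2_sqnorm (fcoeff \<theta>)) * sqrt (l2_sqnorm z)"
    using l2_cauchy_schwarz(2)[OF assms(1) l2_space_reflect(1)[OF z]] l2_space_reflect(2)[OF z] by simp
  finally show ?thesis unfolding z_def .
qed

definition bounded_l2_op :: "((int \<Rightarrow> complex) \<Rightarrow> (int \<Rightarrow> complex)) \<Rightarrow> real \<Rightarrow> bool" where
  "bounded_l2_op \<Phi> M \<longleftrightarrow> 0 \<le> M \<and>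
     (\<forall>x\<in>l2_space. \<Phi> x \<in> l2_space \<and> l2_sqnorm (\<Phi> x) \<le> M * l2_sqnorm x) \<and>
     (\<forall>x y. \<Phi> (\<lambda>i. x i - y i) = (\<lambda>n. \<Phi> x n - \<Phi> y n))"

lemma bounded_l2_op_comp:
  assumes "bounded_l2_op \<Phi> M" "bounded_l2_op \<Psi> M'"
  shows "bounded_l2_op (\<Phi> \<circ> \<Psi>) (M * M')"
  unfolding bounded_l2_op_def
proof (intro conjI ballI allI)
  fix x :: "int \<Rightarrow> complex" assume x: "x \<in> l2_space"
  then have "\<Psi> x \<in> l2_space" "l2_sqnorm (\<Psi> x) \<le> M' * l2_sqnorm x"
    using assms(2) unfolding bounded_l2_op_def by auto
  then show "(\<Phi> \<circ> \<Psi>) x \<in> l2_space" "l2_sqnorm ((\<Phi> \<circ> \<Psi>) x) \<le> M * M' * l2_sqnorm x"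
    using assms(1) unfolding bounded_l2_op_def
    by (auto simp: mult.assoc intro: order_trans[OF _ mult_left_mono])
qed (use assms in \<open>auto simp: bounded_l2_op_def\<close>)

lemma bounded_l2_op_funpow: "bounded_l2_op \<Phi> M \<Longrightarrow> bounded_l2_op (\<Phi> ^^ m) (M ^ m)"
proof (induction m)
  case 0
  then show ?case by (simp add: bounded_l2_op_def)
next
  case (Suc m)
  then have "bounded_l2_op (\<Phi> \<circ> \<Phi> ^^ m) (M * M ^ m)" by (intro bounded_l2_op_comp)
  then show ?case by (simp only: funpow.simps power_Suc)
qed

lemma bounded_l2_op_fin_conv:
  assumes S: "finite S"
  shows "bounded_l2_op (fin_conv a S) (real (card S) * (\<Sum>j\<in>S. (cmod (a j))\<^sup>2))"
  unfolding bounded_l2_op_def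
proof (intro conjI ballI allI)
  fix x :: "int \<Rightarrow> complex" assume x: "x \<in> l2_space"
  have "(\<Sum>n\<in>T. (cmod (fin_conv a S x n))\<^sup>2) \<le> real (card S) * (\<Sum>j\<in>S. (cmod (a j))\<^sup>2) * l2_sqnorm x"
    if T: "finite T" for T
  proof -
    have shift: "(\<Sum>n\<in>T. (cmod (x (n - j)))\<^sup>2) \<le> l2_sqnorm x" for j
    proof -
      have "inj_on (\<lambda>n. n - j) T" by (auto simp: inj_on_def)
      then have "(\<Sum>n\<in>T. (cmod (x (n - j)))\<^sup>2) = (\<Sum>m\<in>(\<lambda>n. n - j) ` T. (cmod (x m))\<^sup>2)"
        by (simp add: sum.reindex)
      also have "\<dots> \<le> l2_sqnorm x" using T x by (intro finite_sum_le_l2_sqnorm) auto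
      finally show ?thesis .
    qed
    have "(\<Sum>n\<in>T. (cmod (fin_conv a S x n))\<^sup>2)
        \<le> (\<Sum>n\<in>T. real (card S) * (\<Sum>j\<in>S. (cmod (a j))\<^sup>2 * (cmod (x (n - j)))\<^sup>2))"
      unfolding fin_conv_def
      by (intro sum_mono order_trans[OF norm_sum_power2_le]) (simp add: norm_mult power_mult_distrib)
    also have "\<dots> = real (card S) * (\<Sum>j\<in>S. (cmod (a j))\<^sup>2 * (\<Sum>n\<in>T. (cmod (x (n - j)))\<^sup>2))"
      by (simp add: sum_distrib_left sum.swap[of _ T])
    also have "\<dots> \<le> real (card S) * (\<Sum>j\<in>S. (cmod (a j))\<^sup>2 * l2_sqnorm x)"
      by (intro mult_left_mono sum_mono shift) auto
    finally show ?thesis by (simp add: sum_distrib_right mult.assoc)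
  qed
  then show "fin_conv a S x \<in> l2_space"
    "l2_sqnorm (fin_conv a S x) \<le> real (card S) * (\<Sum>j\<in>S. (cmod (a j))\<^sup>2) * l2_sqnorm x"
    by (fact l2_space_finite_sums(1), fact l2_space_finite_sums(2))
qed (auto simp: fin_conv_def right_diff_distrib sum_subtractf intro!: mult_nonneg_nonneg sum_nonneg)

lemma bounded_l2_op_up: "bounded_l2_op up 1"
  unfolding bounded_l2_op_def
proof (intro conjI ballI allI)
  fix x :: "int \<Rightarrow> complex" assume x: "x \<in> l2_space"
  have "(\<Sum>n\<in>T. (cmod (up x n))\<^sup>2) \<le> 1 * l2_sqnorm x" if T: "finite T" for T
  proof -
    have "(\<Sum>n\<in>T. (cmod (up x n))\<^sup>2) = (\<Sum>n\<in>{n\<in>T. even n}. (cmod (x (n div 2)))\<^sup>2)"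
      unfolding up_def using T by (auto simp: sum.inter_filter intro!: sum.cong)
    also have "\<dots> = (\<Sum>m\<in>(\<lambda>n. n div 2) ` {n\<in>T. even n}. (cmod (x m))\<^sup>2)"
      by (subst sum.reindex) (auto simp: inj_on_def elim!: evenE)
    also have "\<dots> \<le> l2_sqnorm x" using T x by (intro finite_sum_le_l2_sqnorm) auto
    finally show ?thesis by simp
  qed
  then show "up x \<in> l2_space" "l2_sqnorm (up x) \<le> 1 * l2_sqnorm x"
    by (fact l2_space_finite_sums(1), fact l2_space_finite_sums(2))
qed (auto simp: up_def)

lemma wavelet_col_eq:
  assumes "finite (supp g)"
  shows "wavelet_col g m = ((fin_conv g (supp g) \<circ> up) ^^ m) \<circ> fin_conv (wav_coeff g) (wav_supp g) \<circ> up"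
  unfolding wavelet_col_def[abs_def] mult_filt_ft[OF assms] mult_wav_ft[OF assms] by (simp add: fun_eq_iff)

lemma bounded_l2_op_wavelet_col:
  assumes g: "finite (supp g)" shows "\<exists>M. bounded_l2_op (wavelet_col g m) M"
proof -
  obtain M1 M2 where "bounded_l2_op (fin_conv g (supp g)) M1"
    "bounded_l2_op (fin_conv (wav_coeff g) (wav_supp g)) M2"
    using bounded_l2_op_fin_conv finite_wav_supp g by blast
  then show ?thesis unfolding wavelet_col_eq[OF g]
    by (blast intro: bounded_l2_op_comp bounded_l2_op_funpow bounded_l2_op_up)
qed

lemma l2_space_finite_supp:
  assumes "finite (supp x)" shows "x \<in> l2_space"
proof -
  have "(\<lambda>n. (cmod (x n))\<^sup>2) summable_on supp x" using assms by simp
  then show ?thesis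
    unfolding l2_space_def
    using summable_on_cong_neutral[of "supp x" UNIV "\<lambda>n. (cmod (x n))\<^sup>2" "\<lambda>n. (cmod (x n))\<^sup>2"]
    by (auto simp: supp_def)
qed

definition truncate :: "(int \<Rightarrow> complex) \<Rightarrow> nat \<Rightarrow> int \<Rightarrow> complex" where
  "truncate f p i = (if i \<in> {- int p..int p} then f i else 0)"

lemma finite_supp_truncate: "finite (supp (truncate f p))"
  by (rule finite_subset[of _ "{- int p..int p}"]) (auto simp: supp_def truncate_def)

lemma l2_sqnorm_truncate: "l2_sqnorm (truncate f p) = (\<Sum>i\<in>{- int p..int p}. (cmod (f i))\<^sup>2)"
proof -
  have "l2_sqnorm (truncate f p) = (\<Sum>\<^sub>\<infinity>i\<in>{- int p..int p}. (cmod (f i))\<^sup>2)"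
    unfolding l2_sqnorm_def by (rule infsum_cong_neutral) (auto simp: truncate_def)
  then show ?thesis by simp
qed

lemma truncate_tendsto:
  assumes f: "f \<in> l2_space"
  shows "(\<lambda>p. l2_sqnorm (\<lambda>i. truncate f p i - f i)) \<longlonglongrightarrow> 0"
proof -
  have "(sum (\<lambda>i. (cmod (f i))\<^sup>2) \<longlongrightarrow> l2_sqnorm f) (finite_subsets_at_top UNIV)"
    using f by (simp add: l2_space_def l2_sqnorm_def infsum_tendsto)
  moreover have "filterlim (\<lambda>p. {- int p..int p}) (finite_subsets_at_top UNIV) sequentially"
    unfolding filterlim_finite_subsets_at_top
  proof (intro allI impI)
    fix X :: "int set" assume "finite X \<and> X \<subseteq> UNIV"
    then obtain N where N: "\<And>i. i \<in> X \<Longrightarrow> \<bar>i\<bar> \<le> N"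
      using bdd_above_finite[of "abs ` X"] by (auto simp: bdd_above_def)
    show "\<forall>\<^sub>F p in sequentially. finite {- int p..int p} \<and> X \<subseteq> {- int p..int p} \<and> {- int p..int p} \<subseteq> UNIV"
      unfolding eventually_sequentially
      by (rule exI[of _ "nat N"]) (force dest: N)
  qed
  ultimately have partial: "(\<lambda>p. \<Sum>i\<in>{- int p..int p}. (cmod (f i))\<^sup>2) \<longlonglongrightarrow> l2_sqnorm f"
    by (rule filterlim_compose)
  have "l2_sqnorm (\<lambda>i. truncate f p i - f i) + l2_sqnorm (truncate f p) = l2_sqnorm f" for p
  proof -
    have "(cmod (truncate f p i - f i))\<^sup>2 + (cmod (truncate f p i))\<^sup>2 = (cmod (f i))\<^sup>2" for i
      by (simp add: truncate_def)
    moreover have "truncate f p \<in> l2_space" by (rule l2_space_finite_supp[OF finite_supp_truncate])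
    moreover have "(\<lambda>i. truncate f p i - f i) \<in> l2_space" by (intro l2_space_diff f calculation)
    ultimately show ?thesis
      unfolding l2_sqnorm_def l2_space_def by (simp add: infsum_add[symmetric])
  qed
  then have "(\<lambda>p. l2_sqnorm (\<lambda>i. truncate f p i - f i)) = (\<lambda>p. l2_sqnorm f - (\<Sum>i\<in>{- int p..int p}. (cmod (f i))\<^sup>2))"
    by (simp add: fun_eq_iff l2_sqnorm_truncate eq_diff_eq)
  moreover have "(\<lambda>p. l2_sqnorm f - (\<Sum>i\<in>{- int p..int p}. (cmod (f i))\<^sup>2)) \<longlonglongrightarrow> l2_sqnorm f - l2_sqnorm f"
    by (intro tendsto_diff tendsto_const partial)
  ultimately show ?thesis by simp
qed

lemma l2_tendsto_pointwise:
  assumes "\<And>p. X p \<in> l2_space" "x \<in> l2_space"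
    and "(\<lambda>p. l2_sqnorm (\<lambda>i. X p i - x i)) \<longlonglongrightarrow> 0"
  shows "(\<lambda>p. X p n) \<longlonglongrightarrow> x n"
proof (rule LIM_zero_cancel, rule Lim_null_comparison)
  show "\<forall>\<^sub>F p in sequentially. cmod (X p n - x n) \<le> sqrt (l2_sqnorm (\<lambda>i. X p i - x i))"
    using cmod_le_sqrt_l2_sqnorm[OF l2_space_diff[OF assms(1,2)]] by simp
  show "(\<lambda>p. sqrt (l2_sqnorm (\<lambda>i. X p i - x i))) \<longlonglongrightarrow> 0"
    using tendsto_real_sqrt[OF assms(3)] by simp
qed

lemma mult_tendsto:
  assumes "fcoeff \<theta> \<in> l2_space" "\<And>p. X p \<in> l2_space" "x \<in> l2_space"
    and "(\<lambda>p. l2_sqnorm (\<lambda>i. X p i - x i)) \<longlonglongrightarrow> 0"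
  shows "(\<lambda>p. mult \<theta> (X p) n) \<longlonglongrightarrow> mult \<theta> x n"
proof (rule LIM_zero_cancel, rule Lim_null_comparison)
  show "\<forall>\<^sub>F p in sequentially. cmod (mult \<theta> (X p) n - mult \<theta> x n)
          \<le> sqrt (l2_sqnorm (fcoeff \<theta>)) * sqrt (l2_sqnorm (\<lambda>i. X p i - x i))"
    using mult_diff_bound[OF assms(1,2,3)] by simp
  show "(\<lambda>p. sqrt (l2_sqnorm (fcoeff \<theta>)) * sqrt (l2_sqnorm (\<lambda>i. X p i - x i))) \<longlonglongrightarrow> 0"
    using tendsto_real_sqrt[OF assms(4)] by (simp add: tendsto_mult_right_zero)
qed

lemma bounded_l2_op_tendsto:
  assumes \<Phi>: "bounded_l2_op \<Phi> M" and "\<And>p. X p \<in> l2_space" "x \<in> l2_space"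
    and lim: "(\<lambda>p. l2_sqnorm (\<lambda>i. X p i - x i)) \<longlonglongrightarrow> 0"
  shows "(\<lambda>p. l2_sqnorm (\<lambda>i. \<Phi> (X p) i - \<Phi> x i)) \<longlonglongrightarrow> 0"
proof (rule Lim_null_comparison)
  have "\<Phi> (\<lambda>i. X p i - x i) = (\<lambda>i. \<Phi> (X p) i - \<Phi> x i)" for p
    using \<Phi> unfolding bounded_l2_op_def by blast
  moreover have "l2_sqnorm (\<Phi> (\<lambda>i. X p i - x i)) \<le> M * l2_sqnorm (\<lambda>i. X p i - x i)" for p
    using \<Phi> l2_space_diff[OF assms(2,3)] unfolding bounded_l2_op_def by blast
  ultimately show "\<forall>\<^sub>F p in sequentially. norm (l2_sqnorm (\<lambda>i. \<Phi> (X p) i - \<Phi> x i)) \<le> M * l2_sqnorm (\<lambda>i. X p i - x i)"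
    by (simp add: l2_sqnorm_nonneg)
  show "(\<lambda>p. M * l2_sqnorm (\<lambda>i. X p i - x i)) \<longlonglongrightarrow> 0"
    using lim by (rule tendsto_mult_right_zero)
qed

section \<open>Operator norm bounds\<close>

lemma wavelet_col_diff_finite_supp_le:
  assumes g: "finite (supp g)" "qmf_condition (filt_ft g)" and h: "finite (supp h)" "qmf_condition (filt_ft h)"
    and close: "\<forall>k\<in>{-pi<..<pi}. cmod (filt_ft h k - exp (\<i> * of_real (k / 2)) * filt_ft g k) \<le> \<epsilon>"
    and f: "finite (supp f)" and S: "finite S"
  shows "(\<Sum>n\<in>S. (cmod (wavelet_col g m f n - mult theta_w (wavelet_col h m f) n))\<^sup>2)
           \<le> (real (Suc m))\<^sup>2 * \<epsilon>\<^sup>2 * l2_sqnorm f"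
proof -
  note col_g = filt_ft_wavelet_col[OF g(1) f, of m] and col_h = filt_ft_wavelet_col[OF h(1) f, of m]
  define G where "G k = col_ft g (filt_ft f) m k - theta_w k * col_ft h (filt_ft f) m k" for k
  have bdd_G: "bdd_measurable G"
    unfolding G_def[abs_def] by (intro bdd_measurable_diff bdd_measurable_mult bdd_measurable_col_ft) auto
  have coeff: "wavelet_col g m f n - mult theta_w (wavelet_col h m f) n = fcoeff G n" for n
  proof -
    have "wavelet_col g m f n = fcoeff (col_ft g (filt_ft f) m) n"
      using col_g fcoeff_filt_ft by metis
    moreover have "mult theta_w (wavelet_col h m f) n = fcoeff (\<lambda>k. theta_w k * col_ft h (filt_ft f) m k) n"
      using col_h by (simp add: mult_finite_supp[OF bdd_measurable_theta_w])
    moreover have "bdd_measurable (col_ft g (filt_ft f) m)" "bdd_measurable (\<lambda>k. theta_w k * col_ft h (filt_ft f) m k)"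
      by (auto intro!: bdd_measurable_mult)
    ultimately show ?thesis
      unfolding G_def by (simp add: fcoeff_diff)
  qed
  have "(\<Sum>n\<in>S. (cmod (wavelet_col g m f n - mult theta_w (wavelet_col h m f) n))\<^sup>2)
      \<le> circle_sqnorm G / (2 * pi)"
    unfolding circle_sqnorm_def coeff by (rule bessel_inequality[OF bdd_G S])
  also have "\<dots> \<le> (real (Suc m))\<^sup>2 * \<epsilon>\<^sup>2 * circle_sqnorm (filt_ft f) / (2 * pi)"
    unfolding G_def using g(2) h(2) close
    by (intro divide_right_mono circle_sqnorm_col_ft_diff) (auto intro: periodic_2pi_filt_ft)
  also have "circle_sqnorm (filt_ft f) = 2 * pi * l2_sqnorm f"
    unfolding circle_sqnorm_def filt_ft_eq_trig_poly l2_sqnorm_finite_supp[OF f]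
    by (rule parseval_trig_poly[OF f])
  finally show ?thesis by simp
qed

lemma wavelet_col_diff_finite_sum_le:
  assumes g: "finite (supp g)" "qmf_condition (filt_ft g)" and h: "finite (supp h)" "qmf_condition (filt_ft h)"
    and close: "\<forall>k\<in>{-pi<..<pi}. cmod (filt_ft h k - exp (\<i> * of_real (k / 2)) * filt_ft g k) \<le> \<epsilon>"
    and f: "f \<in> l2_space" and S: "finite S"
  shows "(\<Sum>n\<in>S. (cmod (wavelet_col g m f n - mult theta_w (wavelet_col h m f) n))\<^sup>2)
           \<le> (real (Suc m))\<^sup>2 * \<epsilon>\<^sup>2 * l2_sqnorm f"
proof (rule LIMSEQ_le_const2)
  obtain Mg Mh where Mg: "bounded_l2_op (wavelet_col g m) Mg" and Mh: "bounded_l2_op (wavelet_col h m) Mh"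
    using bounded_l2_op_wavelet_col g(1) h(1) by blast
  have trunc: "truncate f p \<in> l2_space" for p
    by (rule l2_space_finite_supp[OF finite_supp_truncate])
  note lim = truncate_tendsto[OF f]
  have col_l2: "wavelet_col g m x \<in> l2_space" "wavelet_col h m x \<in> l2_space" if "x \<in> l2_space" for x
    using Mg Mh that unfolding bounded_l2_op_def by blast+
  show "(\<lambda>p. \<Sum>n\<in>S. (cmod (wavelet_col g m (truncate f p) n - mult theta_w (wavelet_col h m (truncate f p)) n))\<^sup>2)
        \<longlonglongrightarrow> (\<Sum>n\<in>S. (cmod (wavelet_col g m f n - mult theta_w (wavelet_col h m f) n))\<^sup>2)"
  proof (intro tendsto_sum tendsto_power tendsto_norm tendsto_diff)
    fix n
    show "(\<lambda>p. wavelet_col g m (truncate f p) n) \<longlonglongrightarrow> wavelet_col g m f n"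
      using bounded_l2_op_tendsto[OF Mg trunc f lim]
      by (intro l2_tendsto_pointwise col_l2 trunc f)
    show "(\<lambda>p. mult theta_w (wavelet_col h m (truncate f p)) n) \<longlonglongrightarrow> mult theta_w (wavelet_col h m f) n"
      using bounded_l2_op_tendsto[OF Mh trunc f lim]
      by (intro mult_tendsto fcoeff_l2_space bdd_measurable_theta_w col_l2 trunc f)
  qed
  show "\<exists>p0. \<forall>p\<ge>p0. (\<Sum>n\<in>S. (cmod (wavelet_col g m (truncate f p) n
                               - mult theta_w (wavelet_col h m (truncate f p)) n))\<^sup>2)
                        \<le> (real (Suc m))\<^sup>2 * \<epsilon>\<^sup>2 * l2_sqnorm f"
  proof (intro exI allI impI)
    fix p :: nat
    have "l2_sqnorm (truncate f p) \<le> l2_sqnorm f"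
      unfolding l2_sqnorm_truncate using f by (intro finite_sum_le_l2_sqnorm) auto
    then show "(\<Sum>n\<in>S. (cmod (wavelet_col g m (truncate f p) n
                     - mult theta_w (wavelet_col h m (truncate f p)) n))\<^sup>2)
             \<le> (real (Suc m))\<^sup>2 * \<epsilon>\<^sup>2 * l2_sqnorm f"
      using wavelet_col_diff_finite_supp_le[OF g h close finite_supp_truncate S, of m f p]
      by (meson order_trans mult_left_mono zero_le_mult_iff zero_le_power2)
  qed
qed

lemma wcol_zero: "wcol g L l (\<lambda>_. 0) = (\<lambda>_. 0)"
proof -
  have mult_zero: "mult \<theta> (\<lambda>_. 0) = (\<lambda>_. 0)" for \<theta> by (simp add: mult_def)
  have up_zero: "up (\<lambda>_. 0) = (\<lambda>_. 0)" by (simp add: up_def)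
  have "((mult (filt_ft g) \<circ> up) ^^ j) (\<lambda>_. 0) = (\<lambda>_. 0)" for j
    by (induction j) (simp_all add: mult_zero up_zero)
  then show ?thesis unfolding wcol_def by (simp add: mult_zero up_zero)
qed

lemma wcol_eq_wavelet_col: "1 \<le> l \<Longrightarrow> l \<le> L \<Longrightarrow> wcol g L l = wavelet_col g (l - 1)"
  unfolding wcol_def wavelet_col_def[abs_def] by auto

lemma Wdag_ket_embed:
  assumes "1 \<le> l" "l \<le> L"
  shows "Wdag g L (ket_embed l f) = wavelet_col g (l - 1) f"
proof
  fix n
  have "Wdag g L (ket_embed l f) n = (\<Sum>l'=1..L+1. if l' = l then wcol g L l f n else 0)"
    unfolding Wdag_def ket_embed_def by (intro sum.cong refl) (auto simp: wcol_zero)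
  then show "Wdag g L (ket_embed l f) n = wavelet_col g (l - 1) f n"
    using assms by (simp add: wcol_eq_wavelet_col)
qed

lemma Wdag_p_w: "Wdag g L (p_w L F) = (\<lambda>n. \<Sum>l=1..L. wavelet_col g (l - 1) (\<lambda>m. F (m, l)) n)"
proof
  fix n
  have "Wdag g L (p_w L F) n = (\<Sum>l=1..L+1. if l \<le> L then wavelet_col g (l - 1) (\<lambda>m. F (m, l)) n else 0)"
    unfolding Wdag_def p_w_def by (intro sum.cong refl) (auto simp: wcol_zero wcol_eq_wavelet_col)
  then show "Wdag g L (p_w L F) n = (\<Sum>l=1..L. wavelet_col g (l - 1) (\<lambda>m. F (m, l)) n)"
    by (simp add: sum.If_cases Int_def)
qed

lemma op_norm_le:
  assumes "D \<noteq> {}" "0 \<le> c" and bound: "\<And>f. f \<in> D \<Longrightarrow> l2_sqnorm (T f) \<le> c\<^sup>2 * l2_sqnorm f"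
  shows "op_norm D T \<le> c"
  unfolding op_norm_def
proof (rule cSUP_least[OF assms(1)])
  fix f assume "f \<in> D"
  then have "sqrt (l2_sqnorm (T f)) \<le> c * sqrt (l2_sqnorm f)"
    using real_sqrt_le_mono[OF bound] \<open>0 \<le> c\<close> by (simp add: real_sqrt_mult)
  then show "l2norm (T f) / l2norm f \<le> c"
    unfolding l2norm_eq_sqrt using \<open>0 \<le> c\<close> l2_sqnorm_nonneg[of f]
    by (cases "l2_sqnorm f = 0") (simp_all add: divide_le_eq)
qed

lemma l2_space_slice:
  fixes F :: "int \<times> nat \<Rightarrow> complex"
  assumes "F \<in> l2_space"
  shows "(\<lambda>m. F (m, l)) \<in> l2_space" and "l2_sqnorm (\<lambda>m. F (m, l)) \<le> l2_sqnorm F"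
proof -
  have "(\<Sum>m\<in>S. (cmod (F (m, l)))\<^sup>2) \<le> l2_sqnorm F" if "finite S" for S
  proof -
    have "(\<Sum>m\<in>S. (cmod (F (m, l)))\<^sup>2) = (\<Sum>p\<in>(\<lambda>m. (m, l)) ` S. (cmod (F p))\<^sup>2)"
      by (simp add: sum.reindex inj_on_def)
    also have "\<dots> \<le> l2_sqnorm F" using assms that by (intro finite_sum_le_l2_sqnorm) auto
    finally show ?thesis .
  qed
  then show "(\<lambda>m. F (m, l)) \<in> l2_space" "l2_sqnorm (\<lambda>m. F (m, l)) \<le> l2_sqnorm F"
    by (fact l2_space_finite_sums(1), fact l2_space_finite_sums(2))
qed

lemma qmf_condition_scaling_filter: "scaling_filter h \<Longrightarrow> qmf_condition (filt_ft h)"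
  unfolding scaling_filter_def qmf_condition_def by blast

lemma finite_supp_scaling_filter: "scaling_filter h \<Longrightarrow> finite (supp h)"
  unfolding scaling_filter_def supp_def by blast

lemma Wdag_p_w_diff:
  assumes h: "finite (supp h)" and F: "F \<in> l2_space"
  shows "Wdag g L (p_w L F) n - mult theta_w (Wdag h L (p_w L F)) n
       = (\<Sum>l=1..L. wavelet_col g (l - 1) (\<lambda>m. F (m, l)) n
                     - mult theta_w (wavelet_col h (l - 1) (\<lambda>m. F (m, l))) n)"
proof -
  have "mult theta_w (\<lambda>n. \<Sum>l=1..L. wavelet_col h (l - 1) (\<lambda>m. F (m, l)) n) n
      = (\<Sum>l=1..L. mult theta_w (wavelet_col h (l - 1) (\<lambda>m. F (m, l))) n)"
  proof (rule mult_sum)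
    fix l
    obtain M where "bounded_l2_op (wavelet_col h (l - 1)) M"
      using bounded_l2_op_wavelet_col[OF h] by blast
    then show "wavelet_col h (l - 1) (\<lambda>m. F (m, l)) \<in> l2_space"
      using l2_space_slice(1)[OF F] unfolding bounded_l2_op_def by blast
  qed (auto intro: fcoeff_l2_space)
  then show ?thesis unfolding Wdag_p_w by (simp add: sum_subtractf)
qed

lemma op_norm_wavelet_col_diff_le:
  assumes g: "finite (supp g)" "qmf_condition (filt_ft g)" and h: "finite (supp h)" "qmf_condition (filt_ft h)"
    and close: "\<forall>k\<in>{-pi<..<pi}. cmod (filt_ft h k - exp (\<i> * of_real (k / 2)) * filt_ft g k) \<le> \<epsilon>"
    and "0 \<le> \<epsilon>" "1 \<le> l"
  shows "op_norm l2_space (\<lambda>f n. wavelet_col g (l - 1) f n - mult theta_w (wavelet_col h (l - 1) f) n)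
           \<le> \<epsilon> * real l"
proof (rule op_norm_le)
  show "l2_space \<noteq> {}" unfolding l2_space_def by (auto intro!: exI[of _ "\<lambda>_. 0"])
  fix f :: "int \<Rightarrow> complex" assume "f \<in> l2_space"
  then have "l2_sqnorm (\<lambda>n. wavelet_col g (l - 1) f n - mult theta_w (wavelet_col h (l - 1) f) n)
      \<le> (real (Suc (l - 1)))\<^sup>2 * \<epsilon>\<^sup>2 * l2_sqnorm f"
    by (intro l2_space_finite_sums(2) wavelet_col_diff_finite_sum_le[OF g h close])
  then show "l2_sqnorm (\<lambda>n. wavelet_col g (l - 1) f n - mult theta_w (wavelet_col h (l - 1) f) n)
      \<le> (\<epsilon> * real l)\<^sup>2 * l2_sqnorm f"
    using \<open>1 \<le> l\<close> by (simp add: power_mult_distrib mult_ac)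
qed (use assms in simp)

lemma op_norm_Wdag_diff_le:
  assumes g: "finite (supp g)" "qmf_condition (filt_ft g)" and h: "finite (supp h)" "qmf_condition (filt_ft h)"
    and close: "\<forall>k\<in>{-pi<..<pi}. cmod (filt_ft h k - exp (\<i> * of_real (k / 2)) * filt_ft g k) \<le> \<epsilon>"
    and "0 \<le> \<epsilon>"
  shows "op_norm (tensor_space L) (\<lambda>F n. Wdag g L (p_w L F) n - mult theta_w (Wdag h L (p_w L F)) n)
           \<le> \<epsilon> * (real L)\<^sup>2"
proof (rule op_norm_le)
  show "tensor_space L \<noteq> {}"
    unfolding tensor_space_def l2_space_def by (auto intro!: exI[of _ "\<lambda>_. 0"])
  fix F :: "int \<times> nat \<Rightarrow> complex" assume "F \<in> tensor_space L"
  then have F: "F \<in> l2_space" unfolding tensor_space_def by simp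
  define D where "D l n = wavelet_col g (l - 1) (\<lambda>m. F (m, l)) n
                          - mult theta_w (wavelet_col h (l - 1) (\<lambda>m. F (m, l))) n" for l n
  note diff = Wdag_p_w_diff[OF h(1) F, of g L, folded D_def]
  have "(\<Sum>n\<in>S. (cmod (\<Sum>l=1..L. D l n))\<^sup>2) \<le> (\<epsilon> * (real L)\<^sup>2)\<^sup>2 * l2_sqnorm F" if S: "finite S" for S
  proof -
    have level: "(\<Sum>n\<in>S. (cmod (D l n))\<^sup>2) \<le> (real L)\<^sup>2 * \<epsilon>\<^sup>2 * l2_sqnorm F" if l: "l \<in> {1..L}" for l
    proof -
      have "(\<Sum>n\<in>S. (cmod (D l n))\<^sup>2) \<le> (real (Suc (l - 1)))\<^sup>2 * \<epsilon>\<^sup>2 * l2_sqnorm (\<lambda>m. F (m, l))"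
        unfolding D_def by (rule wavelet_col_diff_finite_sum_le[OF g h close l2_space_slice(1)[OF F] S])
      also have "\<dots> \<le> (real L)\<^sup>2 * \<epsilon>\<^sup>2 * l2_sqnorm F"
        using l l2_space_slice(2)[OF F] l2_sqnorm_nonneg
        by (intro mult_mono mult_right_mono power_mono) auto
      finally show ?thesis .
    qed
    have "(\<Sum>n\<in>S. (cmod (\<Sum>l=1..L. D l n))\<^sup>2) \<le> (\<Sum>n\<in>S. real L * (\<Sum>l=1..L. (cmod (D l n))\<^sup>2))"
      using norm_sum_power2_le[of "\<lambda>l. D l _" "{1..L}"] by (intro sum_mono) simp
    also have "\<dots> = real L * (\<Sum>l=1..L. \<Sum>n\<in>S. (cmod (D l n))\<^sup>2)"
      by (simp add: sum_distrib_left sum.swap[of _ S])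
    also have "\<dots> \<le> real L * (\<Sum>l=1..L. (real L)\<^sup>2 * \<epsilon>\<^sup>2 * l2_sqnorm F)"
      by (intro mult_left_mono sum_mono level) auto
    also have "\<dots> = (\<epsilon> * (real L)\<^sup>2)\<^sup>2 * l2_sqnorm F"
      by (simp add: power2_eq_square)
    finally show ?thesis .
  qed
  then show "l2_sqnorm (\<lambda>n. Wdag g L (p_w L F) n - mult theta_w (Wdag h L (p_w L F)) n)
      \<le> (\<epsilon> * (real L)\<^sup>2)\<^sup>2 * l2_sqnorm F"
    unfolding diff by (rule l2_space_finite_sums(2))
qed (use assms in simp)

theorem lemma2:
  fixes hs gs :: "int \<Rightarrow> complex" and \<epsilon> :: real
  assumes "scaling_filter hs" and "scaling_filter gs"
    and "\<epsilon> \<ge> 0"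
    and "\<forall>k\<in>{-pi<..<pi}. cmod (filt_ft hs k - exp (\<i> * of_real (k / 2)) * filt_ft gs k) \<le> \<epsilon>"
  shows "\<forall>L::nat. L \<ge> 1 \<longrightarrow>
           (\<forall>l\<in>{1..L}.
              op_norm l2_space (\<lambda>f. (\<lambda>n. Wdag gs L (ket_embed l f) n
                                      - mult theta_w (Wdag hs L (ket_embed l f)) n))
                \<le> \<epsilon> * real l) \<and>
           op_norm (tensor_space L) (\<lambda>F. (\<lambda>n. Wdag gs L (p_w L F) n
                                      - mult theta_w (Wdag hs L (p_w L F)) n))
                \<le> \<epsilon> * (real L)\<^sup>2"
proof (intro allI impI conjI ballI)
  fix L :: nat
  note h = finite_supp_scaling_filter[OF assms(1)] qmf_condition_scaling_filter[OF assms(1)]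
  note g = finite_supp_scaling_filter[OF assms(2)] qmf_condition_scaling_filter[OF assms(2)]
  show "op_norm (tensor_space L) (\<lambda>F n. Wdag gs L (p_w L F) n - mult theta_w (Wdag hs L (p_w L F)) n)
          \<le> \<epsilon> * (real L)\<^sup>2"
    by (rule op_norm_Wdag_diff_le[OF g h assms(4,3)])
  fix l assume l: "l \<in> {1..L}"
  then show "op_norm l2_space (\<lambda>f n. Wdag gs L (ket_embed l f) n - mult theta_w (Wdag hs L (ket_embed l f)) n)
          \<le> \<epsilon> * real l"
    using op_norm_wavelet_col_diff_le[OF g h assms(4,3)] by (simp add: Wdag_ket_embed)
qed

end
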